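(* Let $A_0,A_1,A_2,\ldots$ be complex random variables on a common probability space (not necessarily independent, not necessarily identically distributed) satisfying Assumptions 1 and 2 below. Let $P_n(z)=\sum_{k=0}^n A_k z^k$, $n\in\mathbb N$, and let $\tau_n$ be the zero counting measure of $P_n$. Then, almost surely, $\tau_n$ converges weakly to $\mu_{\mathbb T}$ as $n\to\infty$, where $d\mu_{\mathbb T}(e^{i\theta})=d\theta/(2\pi)$ is the normalized arclength measure on the unit circle $\mathbb T$. Assumption 1: there are $a>1$ and a decreasing function $f:[a,\infty)\to[0,1]$ with $\int_a^\infty \frac{f(x)}{x}\,dx<\infty$ and $1-F_k(x)\le f(x)$ for all $x\in[a,\infty)$ and all $k\ge 0$. Assumption 2: there are $0<b<1$ and an increasing function $g:[0,b]\to[0,1]$ with $\int_0^b \frac{g(x)}{x}\,dx<\infty$ and $F_k(x)\le g(x)$ for all $x\in[0,b]$ and all $k\ge0$.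
   Context: $F_k(x)=\mathbb P(|A_k|\le x)$ denotes the distribution function of $|A_k|$. For a polynomial $P_n$ of degree $n$ with zeros $Z_1,\dots,Z_n$ (listed with multiplicity), its zero counting measure is $\tau_n=\frac1n\sum_{j=1}^n\delta_{Z_j}$. (Assumption 2 forces $\mathbb P(A_n=0)=0$, so $P_n$ has degree $n$ almost surely.) *)

theory Defs
  imports "HOL-Probability.Probability" "HOL-Computational_Algebra.Polynomial"
begin

definition rand_poly :: "(nat \<Rightarrow> 'a \<Rightarrow> complex) \<Rightarrow> nat \<Rightarrow> 'a \<Rightarrow> complex poly" where
  "rand_poly A n \<omega> = (\<Sum>k\<le>n. monom (A k \<omega>) k)"

definition zero_counting_measure :: "nat \<Rightarrow> complex poly \<Rightarrow> complex measure" where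
  "zero_counting_measure n p = measure_of UNIV (sets borel)
     (\<lambda>S. ennreal ((\<Sum>z\<in>{z. poly p z = 0} \<inter> S. real (order z p)) / real n))"

definition unit_circle_measure :: "complex measure" where
  "unit_circle_measure = distr (uniform_measure lborel {0..2*pi}) borel cis"

definition weak_conv_c :: "(nat \<Rightarrow> complex measure) \<Rightarrow> complex measure \<Rightarrow> bool" where
  "weak_conv_c \<mu>s \<mu> \<longleftrightarrow> (\<forall>f :: complex \<Rightarrow> real. continuous_on UNIV f \<and> bounded (range f) \<longrightarrow>
      (\<lambda>n. integral\<^sup>L (\<mu>s n) f) \<longlonglongrightarrow> integral\<^sup>L \<mu> f)"

definition dist_fun :: "'a measure \<Rightarrow> (nat \<Rightarrow> 'a \<Rightarrow> complex) \<Rightarrow> nat \<Rightarrow> real \<Rightarrow> real" where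
  "dist_fun M A k x = measure M {\<omega>\<in>space M. cmod (A k \<omega>) \<le> x}"

end

theory Submission
  imports Defs "HOL-Complex_Analysis.Complex_Analysis"
    "HOL-Computational_Algebra.Fundamental_Theorem_Algebra" "HOL-Real_Asymp.Real_Asymp"
begin

text \<open>
  By Borel--Cantelli, the two integrability conditions make almost surely \<open>A 0 \<noteq> 0\<close> and
  \<open>exp (-\<epsilon> n) \<le> |A n| \<le> exp (\<epsilon> n)\<close> for large \<open>n\<close>, for every \<open>\<epsilon> > 0\<close>. For such coefficients the sup
  norm \<open>L n\<close> of \<open>P n\<close> on the unit circle satisfies \<open>ln (L n / |A n|) = o(n)\<close> and
  \<open>ln (L n / |A 0|) = o(n)\<close>, where \<open>|A 0| = |A n| \<Prod>|Z j|\<close>.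

  Write \<open>P n\<close> as \<open>A n \<Prod>(z - Z j)\<close> and reflect the zeros outside the disc into it. By the maximum
  modulus principle the reflected product \<open>\<Prod>(1 - w j \<zeta>)\<close> is bounded on the closed disc by
  \<open>L n / |A n|\<close>; expanding \<open>ln |1 - w \<zeta>|\<close> in a Fourier series then bounds every power sum
  \<open>\<Sum> w j ^ m\<close> by \<open>O(ln (L n / |A n|))\<close>. Jensen-type bookkeeping gives
  \<open>\<Sum> |ln |Z j|| \<le> ln (L n / |A n|) + ln (L n / |A 0|)\<close>. Hence the arguments of the zeros have
  vanishing moments, i.e.\ they are equidistributed (Weyl's criterion and Stone--Weierstrass), and the zeros themselves
  concentrate at the unit circle.
\<close>

section \<open>Fourier coefficients of \<open>ln |1 - a e^(it)|\<close>\<close>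

lemma has_integral_cis_mult:
  fixes x :: real assumes "x \<in> \<int>" "x \<noteq> 0"
  shows "((\<lambda>t. cis (x*t)) has_integral 0) {0..2*pi}"
proof -
  have deriv: "((\<lambda>t. cis (x*t) / (\<i> * of_real x)) has_vector_derivative cis (x*t)) (at t within S)"
    for t and S :: "real set"
  proof -
    have "((\<lambda>t. cis (x*t)) has_derivative (\<lambda>h. (x*h) *\<^sub>R (\<i> * cis (x*t)))) (at t within S)"
      by (auto intro!: derivative_eq_intros)
    then have "((\<lambda>t. cis (x*t)) has_vector_derivative (x *\<^sub>R (\<i> * cis (x*t)))) (at t within S)"
      by (simp add: has_vector_derivative_def mult.commute)
    then have "((\<lambda>t. cis (x*t) / (\<i> * of_real x)) has_vector_derivative
        (x *\<^sub>R (\<i> * cis (x*t))) / (\<i> * of_real x)) (at t within S)"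
      by (intro derivative_intros)
    then show ?thesis using assms by (simp add: scaleR_conv_of_real field_simps)
  qed
  have "((\<lambda>t. cis (x*t)) has_integral
      (cis (x*(2*pi)) / (\<i> * of_real x) - cis (x*0) / (\<i> * of_real x))) {0..2*pi}"
    by (rule fundamental_theorem_of_calculus) (use deriv in auto)
  moreover have "cis (x*(2*pi)) = 1"
    using assms(1) cis_multiple_2pi[of x] by (simp add: mult.commute mult.left_commute)
  ultimately show ?thesis by simp
qed

lemma has_integral_Re_power_cis_coeff:
  fixes a :: complex and k m :: nat
  shows "((\<lambda>t. - of_real (Re (a^k * cis (real k * t)) / real k) * cis (- (real m * t)))
          has_integral (if k = m \<and> m \<noteq> 0 then - of_real pi * a^m / of_nat m else 0)) {0..2*pi}"
proof (cases "k = 0")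
  case True
  then show ?thesis by simp
next
  case False
  have eq: "- of_real (Re (a^k * cis (real k * t)) / real k) * cis (- (real m * t))
     = (- 1 / (2 * of_nat k)) * (a^k * cis ((real k - real m) * t)
         + cnj a ^ k * cis ((- real k - real m) * t))" for t
  proof -
    have "of_real (Re (a^k * cis (real k * t)))
        = (a^k * cis (real k * t) + cnj (a^k * cis (real k * t))) / 2"
      using complex_add_cnj[of "a^k * cis (real k * t)"] by simp
    also have "cnj (a^k * cis (real k * t)) = cnj a ^ k * cis (- (real k * t))" by (simp add: cis_cnj)
    finally have r: "of_real (Re (a^k * cis (real k * t)))
        = (a^k * cis (real k * t) + cnj a ^ k * cis (- (real k * t))) / 2" .
    have "- of_real (Re (a^k * cis (real k * t)) / real k) * cis (- (real m * t))
        = (- 1 / (2 * of_nat k)) * (a^k * (cis (real k * t) * cis (- (real m * t)))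
            + cnj a ^ k * (cis (- (real k * t)) * cis (- (real m * t))))"
      unfolding of_real_divide r by (simp add: field_simps)
    then show ?thesis by (simp add: cis_mult algebra_simps)
  qed
  have i1: "((\<lambda>t. cis ((real k - real m) * t)) has_integral (if k = m then 2*pi else 0)) {0..2*pi}"
  proof (cases "k = m")
    case True
    then show ?thesis
      using has_integral_const_real[of "1::complex" 0 "2*pi"] by (simp add: scaleR_conv_of_real)
  next
    case False
    then show ?thesis by (simp add: has_integral_cis_mult)
  qed
  have i2: "((\<lambda>t. cis ((- real k - real m) * t)) has_integral 0) {0..2*pi}"
    by (rule has_integral_cis_mult) (use False in auto)
  have "((\<lambda>t. (- 1 / (2 * of_nat k)) * (a^k * cis ((real k - real m) * t)
        + cnj a ^ k * cis ((- real k - real m) * t)))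
     has_integral ((- 1 / (2 * of_nat k)) * (a^k * (if k = m then 2*pi else 0) + cnj a ^ k * 0)))
     {0..2*pi}"
    by (intro has_integral_mult_right has_integral_add i1 i2)
  then show ?thesis using False unfolding eq by (auto simp: field_simps)
qed

text \<open>Termwise integration of \<open>ln |1 - a e^(it)| = - \<Sum>k\<ge>1. Re (a^k e^(ikt)) / k\<close>, which converges
  uniformly for \<open>|a| \<le> 1/2\<close>.\<close>
lemma fourier_coeff_ln_norm_one_minus:
  fixes a :: complex and m :: nat
  assumes a: "cmod a \<le> 1/2"
  shows "((\<lambda>t. of_real (ln (cmod (1 - a * cis t))) * cis (- (real m * t)))
          has_integral (if m = 0 then 0 else - of_real pi * a^m / of_nat m)) {0..2*pi}"
proof -
  define T where "T k t = - of_real (Re (a^k * cis (real k * t)) / real k) * cis (- (real m * t))"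
    for k t
  define F where "F t = of_real (ln (cmod (1 - a * cis t))) * cis (- (real m * t))" for t
  have sums: "(\<lambda>k. T k t) sums F t" for t
  proof -
    have n1: "cmod (- (a * cis t)) < 1" using a by (simp add: norm_mult)
    have "(\<lambda>k. - ((- (- (a * cis t)))^k) / of_nat k) sums Ln (1 + - (a * cis t))"
      by (rule Ln_series'[OF n1])
    then have "(\<lambda>k. Re (- ((a * cis t)^k) / of_nat k)) sums Re (Ln (1 - a * cis t))"
      by (intro sums_Re) simp
    moreover have "1 - a * cis t \<noteq> 0"
    proof
      assume "1 - a * cis t = 0"
      then have "cmod (a * cis t) = 1" by simp
      then show False using a by (simp add: norm_mult)
    qed
    ultimately have "(\<lambda>k. Re (- ((a * cis t)^k) / of_nat k)) sums ln (cmod (1 - a * cis t))"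
      by simp
    moreover have "Re (- ((a * cis t)^k) / of_nat k) = - (Re (a^k * cis (real k * t)) / real k)" for k
    proof -
      have "(a * cis t)^k = a^k * cis (real k * t)" by (simp only: power_mult_distrib Complex.DeMoivre)
      moreover have "Re (- z / of_nat k) = - (Re z / real k)" for z :: complex
        by (simp add: Re_divide_of_nat)
      ultimately show ?thesis by (simp only:)
    qed
    ultimately have "(\<lambda>k. - (Re (a^k * cis (real k * t)) / real k)) sums ln (cmod (1 - a * cis t))"
      by (simp only:)
    then have "(\<lambda>k. of_real (- (Re (a^k * cis (real k * t)) / real k)) * cis (- (real m * t)))
        sums F t"
      unfolding F_def by (intro sums_mult2 sums_of_real)
    then show ?thesis unfolding T_def by simp
  qed
  have bound: "norm (T k t) \<le> (1/2)^k" for k t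
  proof (cases "k = 0")
    case True then show ?thesis by (simp add: T_def)
  next
    case False
    have "norm (T k t) = \<bar>Re (a^k * cis (real k * t)) / real k\<bar>" unfolding T_def
      by (simp only: norm_mult norm_minus_cancel norm_of_real norm_cis mult_1_right)
    also have "\<dots> = \<bar>Re (a^k * cis (real k * t))\<bar> / real k" by simp
    also have "\<dots> \<le> \<bar>Re (a^k * cis (real k * t))\<bar>"
      using False divide_left_mono[of 1 "real k" "\<bar>Re (a^k * cis (real k * t))\<bar>"] by simp
    also have "\<dots> \<le> cmod (a^k * cis (real k * t))" by (rule abs_Re_le_cmod)
    also have "\<dots> = cmod a ^ k" by (simp add: norm_mult norm_power)
    also have "\<dots> \<le> (1/2)^k" using a by (intro power_mono) auto
    finally show ?thesis .
  qed
  have "uniform_limit {0..2*pi} (\<lambda>n t. \<Sum>k<n. T k t) (\<lambda>t. suminf (\<lambda>k. T k t)) sequentially"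
    by (rule Weierstrass_m_test[OF bound]) (simp add: summable_geometric)
  moreover have "(\<lambda>t. suminf (\<lambda>k. T k t)) = F" using sums sums_unique by (metis ext)
  ultimately have ul: "uniform_limit {0..2*pi} (\<lambda>n t. \<Sum>k<n. T k t) F sequentially" by simp
  have "continuous_on {0..2*pi} (T k)" for k
    by (cases "k = 0") (auto simp: T_def[abs_def] intro!: continuous_intros)
  then have cont: "continuous_on {0..2*pi} (\<lambda>t. \<Sum>k<n. T k t)" for n
    by (intro continuous_on_sum)
  obtain I J where I: "\<And>n. ((\<lambda>t. \<Sum>k<n. T k t) has_integral I n) {0..2*pi}"
    and J: "(F has_integral J) {0..2*pi}" and IJ: "I \<longlonglongrightarrow> J"
    by (rule uniform_limit_integral[OF ul cont]) auto
  define c where "c = (if m = 0 then 0 else - of_real pi * a^m / of_nat m)"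
  have In: "I n = (if m < n then c else 0)" for n
  proof -
    have "((\<lambda>t. \<Sum>k<n. T k t) has_integral
        (\<Sum>k<n. (if k = m \<and> m \<noteq> 0 then - of_real pi * a^m / of_nat m else 0))) {0..2*pi}"
      unfolding T_def by (intro has_integral_sum has_integral_Re_power_cis_coeff) auto
    moreover have "(\<Sum>k<n. (if k = m \<and> m \<noteq> 0 then - of_real pi * a^m / of_nat m else 0))
        = (if m < n then c else 0)"
      by (auto simp: c_def sum.delta)
    ultimately show ?thesis using I has_integral_unique by metis
  qed
  have "eventually (\<lambda>n. I n = c) sequentially"
    using eventually_gt_at_top[of m] by eventually_elim (simp add: In)
  then have "I \<longlonglongrightarrow> c" by (rule tendsto_eventually)
  then have "J = c" using IJ LIMSEQ_unique by blast
  then show ?thesis using J unfolding F_def c_def by simp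
qed

text \<open>An Erdos--Turan type estimate: the \<open>m\<close>-th Fourier coefficient of
  \<open>H t = \<Sum>i. ln |1 - w i e^(it) / 2|\<close> is \<open>-\<pi>/m \<Sum>i. (w i / 2)^m\<close>, and since \<open>H\<close> has mean \<open>0\<close> and is
  bounded above by \<open>ln E\<close>, its \<open>L\<^sup>1\<close>-norm is at most \<open>4 \<pi> ln E\<close>.\<close>
lemma norm_power_sum_le_ln_sup:
  fixes w :: "nat \<Rightarrow> complex" and n m :: nat and E :: real
  assumes w: "\<And>i. i < n \<Longrightarrow> cmod (w i) \<le> 1" and m: "m \<ge> 1" and E: "E \<ge> 1"
    and Q: "\<And>\<zeta>. cmod \<zeta> \<le> 1 \<Longrightarrow> cmod (\<Prod>i<n. (1 - w i * \<zeta>)) \<le> E"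
  shows "cmod (\<Sum>i<n. w i ^ m) \<le> 4 * m * 2^m * ln E"
proof -
  define a where "a i = w i / 2" for i
  have a: "cmod (a i) \<le> 1/2" if "i < n" for i using w[OF that] by (simp add: a_def)
  define H where "H t = (\<Sum>i<n. ln (cmod (1 - a i * cis t)))" for t
  have nz: "1 - a i * cis t \<noteq> 0" if "i < n" for i t
  proof
    assume "1 - a i * cis t = 0"
    then have "cmod (a i * cis t) = 1" by (metis eq_iff_diff_eq_0 norm_one)
    then show False using a[OF that] by (simp add: norm_mult)
  qed
  have Hle: "H t \<le> ln E" for t
  proof -
    have prod: "cmod (\<Prod>i<n. (1 - w i * (cis t / 2))) = (\<Prod>i<n. cmod (1 - a i * cis t))"
      by (simp add: prod_norm a_def)
    have "H t = ln (\<Prod>i<n. cmod (1 - a i * cis t))"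
      unfolding H_def by (rule ln_prod[symmetric]) (use nz in auto)
    also have "\<dots> \<le> ln E"
      using Q[of "cis t / 2"] nz E unfolding prod by (subst ln_le_cancel_iff) (auto intro!: prod_pos)
    finally show ?thesis .
  qed
  have intm: "((\<lambda>t. of_real (H t) * cis (- (real k * t))) has_integral
       (\<Sum>i<n. (if k = 0 then 0 else - of_real pi * a i ^ k / of_nat k))) {0..2*pi}" for k
  proof -
    have "((\<lambda>t. \<Sum>i<n. of_real (ln (cmod (1 - a i * cis t))) * cis (- (real k * t))) has_integral
       (\<Sum>i<n. (if k = 0 then 0 else - of_real pi * a i ^ k / of_nat k))) {0..2*pi}"
      by (intro has_integral_sum fourier_coeff_ln_norm_one_minus a) auto
    then show ?thesis by (simp add: H_def sum_distrib_right)
  qed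
  have H0: "(H has_integral 0) {0..2*pi}"
  proof -
    have "((\<lambda>t. of_real (H t) :: complex) has_integral 0) {0..2*pi}" using intm[of 0] by simp
    from has_integral_linear[OF this bounded_linear_Re] show ?thesis by (simp add: o_def)
  qed
  have Hint: "H integrable_on {0..2*pi}" using H0 by blast
  have "norm (integral {0..2*pi} (\<lambda>t. of_real (H t) * cis (- (real m * t))))
      \<le> integral {0..2*pi} (\<lambda>t. 2 * ln E - H t)"
  proof (rule integral_norm_bound_integral)
    show "(\<lambda>t. of_real (H t) * cis (- (real m * t))) integrable_on {0..2*pi}" using intm by blast
    show "(\<lambda>t. 2 * ln E - H t) integrable_on {0..2*pi}"
      by (intro integrable_diff Hint integrable_const_ivl)
    fix t
    have "\<bar>H t\<bar> \<le> 2 * ln E - H t" using Hle[of t] E by (smt (verit) ln_ge_zero)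
    then show "norm (of_real (H t) * cis (- (real m * t))) \<le> 2 * ln E - H t" by (simp add: norm_mult)
  qed
  also have "integral {0..2*pi} (\<lambda>t. 2 * ln E - H t) = 2 * ln E * (2 * pi) - 0"
    by (subst integral_diff) (use Hint H0 in \<open>auto simp: integral_unique\<close>)
  finally have "norm (\<Sum>i<n. (if m = 0 then 0 else - of_real pi * a i ^ m / of_nat m))
      \<le> 4 * pi * ln E"
    using integral_unique[OF intm[of m]] by (simp add: mult_ac)
  moreover have "(\<Sum>i<n. (if m = 0 then 0 else - of_real pi * a i ^ m / of_nat m))
      = - (of_real pi / (of_nat m * 2^m)) * (\<Sum>i<n. w i ^ m)"
    using m by (simp add: a_def sum_distrib_left power_divide field_simps sum_negf)
  ultimately have "pi / (real m * 2^m) * cmod (\<Sum>i<n. w i ^ m) \<le> 4 * pi * ln E"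
    by (simp add: norm_mult norm_divide norm_power)
  then show ?thesis using m by (simp add: field_simps)
qed

section \<open>Zeros of a polynomial bounded on the unit circle\<close>

definition disc_reflect :: "complex \<Rightarrow> complex" where
  "disc_reflect r = (if cmod r \<le> 1 then r else 1 / cnj r)"

lemma norm_disc_reflect_le: "r \<noteq> 0 \<Longrightarrow> cmod (disc_reflect r) \<le> 1"
  by (auto simp: disc_reflect_def norm_divide field_simps)

lemma norm_one_minus_disc_reflect_mult:
  fixes r \<zeta> :: complex
  assumes r: "r \<noteq> 0" and z: "cmod \<zeta> = 1"
  shows "cmod (1 - disc_reflect r * \<zeta>) = cmod (cnj \<zeta> - r) / max 1 (cmod r)"
proof -
  have zz: "cnj \<zeta> * \<zeta> = 1"
    using complex_norm_square[of \<zeta>] z by (simp add: mult.commute)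
  show ?thesis
  proof (cases "cmod r \<le> 1")
    case True
    have "1 - r * \<zeta> = \<zeta> * (cnj \<zeta> - r)" using zz by (simp add: algebra_simps)
    then show ?thesis using True z by (simp add: disc_reflect_def norm_mult)
  next
    case False
    have "1 - 1 / cnj r * \<zeta> = (cnj r - \<zeta>) / cnj r" using r by (simp add: field_simps)
    moreover have "cmod (cnj r - \<zeta>) = cmod (cnj \<zeta> - r)"
      by (metis complex_cnj_cnj complex_cnj_diff complex_mod_cnj norm_minus_commute)
    ultimately show ?thesis using False by (simp add: disc_reflect_def norm_divide)
  qed
qed

text \<open>On the circle, reflecting the zeros only rescales \<open>c \<Prod>(\<zeta> - r i)\<close>; the maximum modulus
  principle extends the bound to the disc.\<close>
lemma norm_prod_one_minus_disc_reflect_le: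
  fixes r :: "nat \<Rightarrow> complex" and c :: complex and L :: real
  assumes r: "\<And>i. i<n \<Longrightarrow> r i \<noteq> 0" and c: "c \<noteq> 0"
    and L: "\<And>\<zeta>. cmod \<zeta> = 1 \<Longrightarrow> cmod (c * (\<Prod>i<n. (\<zeta> - r i))) \<le> L"
    and z: "cmod \<zeta> \<le> 1"
  shows "cmod (\<Prod>i<n. (1 - disc_reflect (r i) * \<zeta>))
           \<le> L / (cmod c * (\<Prod>i<n. max 1 (cmod (r i))))"
proof -
  define Mf where "Mf = (\<Prod>i<n. max 1 (cmod (r i)))"
  have Mf: "Mf > 0" unfolding Mf_def by (intro prod_pos) auto
  have circ: "cmod (\<Prod>i<n. (1 - disc_reflect (r i) * \<xi>)) \<le> L / (cmod c * Mf)"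
    if "\<xi> \<in> frontier (cball 0 1)" for \<xi>
  proof -
    have x1: "cmod \<xi> = 1" using that by simp
    have "cmod (\<Prod>i<n. (1 - disc_reflect (r i) * \<xi>))
        = (\<Prod>i<n. cmod (cnj \<xi> - r i) / max 1 (cmod (r i)))"
      unfolding prod_norm[symmetric]
      by (intro prod.cong refl norm_one_minus_disc_reflect_mult r x1) auto
    also have "\<dots> = cmod (c * (\<Prod>i<n. (cnj \<xi> - r i))) / (cmod c * Mf)"
      using c by (simp add: Mf_def prod_dividef norm_mult prod_norm)
    also have "\<dots> \<le> L / (cmod c * Mf)"
      using L[of "cnj \<xi>"] x1 Mf c by (intro divide_right_mono) auto
    finally show ?thesis .
  qed
  have "cmod (\<Prod>i<n. (1 - disc_reflect (r i) * \<zeta>)) \<le> L / (cmod c * Mf)"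
    by (rule maximum_modulus_frontier[where S = "cball 0 1"])
       (use circ z in \<open>auto intro!: holomorphic_intros continuous_intros\<close>)
  then show ?thesis unfolding Mf_def .
qed

lemma norm_mult_prod_max_one_le:
  fixes r :: "nat \<Rightarrow> complex" and c :: complex and L :: real
  assumes r: "\<And>i. i<n \<Longrightarrow> r i \<noteq> 0" and c: "c \<noteq> 0"
    and L: "\<And>\<zeta>. cmod \<zeta> = 1 \<Longrightarrow> cmod (c * (\<Prod>i<n. (\<zeta> - r i))) \<le> L"
  shows "cmod c * (\<Prod>i<n. max 1 (cmod (r i))) \<le> L"
proof -
  have "(\<Prod>i<n. max 1 (cmod (r i))) > 0" by (intro prod_pos) auto
  then show ?thesis
    using norm_prod_one_minus_disc_reflect_le[OF r c L, of 0] c by (simp add: field_simps)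
qed

lemma norm_power_sum_disc_reflect_le:
  fixes r :: "nat \<Rightarrow> complex" and c :: complex and L :: real
  assumes r: "\<And>i. i<n \<Longrightarrow> r i \<noteq> 0" and c: "c \<noteq> 0"
    and L: "\<And>\<zeta>. cmod \<zeta> = 1 \<Longrightarrow> cmod (c * (\<Prod>i<n. (\<zeta> - r i))) \<le> L"
    and m: "m \<ge> 1"
  shows "cmod (\<Sum>i<n. disc_reflect (r i) ^ m) \<le> 4 * real m * 2^m * ln (L / cmod c)"
proof -
  define Mf where "Mf = (\<Prod>i<n. max 1 (cmod (r i)))"
  have Mf: "Mf \<ge> 1" unfolding Mf_def by (intro prod_ge_1) auto
  have cpos: "cmod c > 0" using c by simp
  have CM: "cmod c * Mf \<le> L" unfolding Mf_def by (rule norm_mult_prod_max_one_le[OF r c L])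
  have E1: "L / (cmod c * Mf) \<ge> 1" using CM Mf cpos by (simp add: field_simps)
  have Lpos: "L > 0" using CM Mf cpos by (smt (verit) mult_pos_pos)
  have "cmod (\<Sum>i<n. disc_reflect (r i) ^ m) \<le> 4 * real m * 2^m * ln (L / (cmod c * Mf))"
    using norm_power_sum_le_ln_sup[OF norm_disc_reflect_le[OF r] m E1]
      norm_prod_one_minus_disc_reflect_le[OF r c L] unfolding Mf_def by simp
  also have "ln (L / (cmod c * Mf)) \<le> ln (L / cmod c)"
    using Lpos Mf cpos by (subst ln_le_cancel_iff) (auto simp: field_simps)
  finally show ?thesis by (simp add: mult_left_mono)
qed

text \<open>Since \<open>|ln x| = 2 ln (max 1 x) - ln x\<close>, this combines the bound on \<open>\<Prod> max 1 |r i|\<close> with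
  \<open>|c| \<Prod>|r i| = |c \<Prod>(0 - r i)|\<close>.\<close>
lemma sum_abs_ln_norm_le:
  fixes r :: "nat \<Rightarrow> complex" and c :: complex and L :: real
  assumes r: "\<And>i. i<n \<Longrightarrow> r i \<noteq> 0" and c: "c \<noteq> 0"
    and L: "\<And>\<zeta>. cmod \<zeta> = 1 \<Longrightarrow> cmod (c * (\<Prod>i<n. (\<zeta> - r i))) \<le> L"
  shows "(\<Sum>i<n. \<bar>ln (cmod (r i))\<bar>) \<le> ln (L / cmod c) + ln (L / (cmod c * (\<Prod>i<n. cmod (r i))))"
proof -
  define Mf where "Mf = (\<Prod>i<n. max 1 (cmod (r i)))"
  have Mf: "Mf \<ge> 1" unfolding Mf_def by (intro prod_ge_1) auto
  have cpos: "cmod c > 0" using c by simp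
  have CM: "cmod c * Mf \<le> L" unfolding Mf_def by (rule norm_mult_prod_max_one_le[OF r c L])
  have Lpos: "L > 0" using CM Mf cpos by (smt (verit) mult_pos_pos)
  have "(\<Sum>i<n. ln (max 1 (cmod (r i)))) = ln Mf"
    unfolding Mf_def by (rule ln_prod[symmetric]) auto
  also have "ln Mf \<le> ln (L / cmod c)" using CM Mf cpos Lpos
    by (subst ln_le_cancel_iff) (auto simp: field_simps)
  finally have S1: "(\<Sum>i<n. ln (max 1 (cmod (r i)))) \<le> ln (L / cmod c)" .
  have abs_ln: "\<bar>ln x\<bar> = 2 * ln (max 1 x) - ln x" if "x > 0" for x :: real
    using that by (cases "x \<le> 1") (auto simp: max_def)
  have e1: "(\<Sum>i<n. \<bar>ln (cmod (r i))\<bar>)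
      = 2 * (\<Sum>i<n. ln (max 1 (cmod (r i)))) - (\<Sum>i<n. ln (cmod (r i)))"
    using r by (simp add: abs_ln sum_subtractf sum_distrib_left)
  have e2: "(\<Sum>i<n. ln (cmod (r i))) = ln (\<Prod>i<n. cmod (r i))"
    by (rule ln_prod[symmetric]) (use r in auto)
  have pp: "(\<Prod>i<n. cmod (r i)) > 0" using r by (intro prod_pos) auto
  have e3: "ln (\<Prod>i<n. cmod (r i)) = ln (cmod c * (\<Prod>i<n. cmod (r i))) - ln (cmod c)"
    using ln_mult_pos[OF cpos pp] by linarith
  have e4: "ln (L / cmod c) + ln (L / (cmod c * (\<Prod>i<n. cmod (r i))))
      = 2 * ln (L / cmod c) - (ln (cmod c * (\<Prod>i<n. cmod (r i))) - ln (cmod c))"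
    using ln_mult_pos[OF cpos pp] ln_divide_pos[OF Lpos cpos]
      ln_divide_pos[OF Lpos mult_pos_pos[OF cpos pp]] by linarith
  show ?thesis unfolding e4 e1 e2 e3 using S1 by linarith
qed

lemma norm_sgn_power_minus_disc_reflect_power_le:
  fixes r :: complex assumes r: "r \<noteq> 0"
  shows "cmod (sgn r ^ m - disc_reflect r ^ m) \<le> m * \<bar>ln (cmod r)\<bar>"
proof -
  define x where "x = cmod r"
  have x: "x > 0" using r by (simp add: x_def)
  have nm: "cmod (r * of_real y) = x * \<bar>y\<bar>" for y by (simp add: norm_mult x_def)
  have d: "cmod (sgn r - disc_reflect r) \<le> \<bar>ln x\<bar>"
  proof (cases "x \<le> 1")
    case True
    have "sgn r - r = r * of_real (1 / x - 1)" using x by (simp add: sgn_eq x_def field_simps)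
    then have "cmod (sgn r - r) = x * \<bar>1 / x - 1\<bar>" by (simp only: nm)
    also have "\<dots> = 1 - x" using x True by (simp add: field_simps abs_if)
    also have "\<dots> \<le> \<bar>ln x\<bar>" using ln_le_minus_one[OF x] by linarith
    finally show ?thesis using True by (simp add: disc_reflect_def x_def)
  next
    case False
    have cr: "1 / cnj r = r / of_real (x^2)"
      using r complex_norm_square[of r] by (simp add: x_def field_simps)
    have "sgn r - 1 / cnj r = r * of_real (1 / x - 1 / x^2)" unfolding cr using x
      by (simp add: sgn_eq x_def field_simps)
    then have "cmod (sgn r - 1 / cnj r) = x * \<bar>1 / x - 1 / x^2\<bar>" by (simp only: nm)
    also have "\<dots> = 1 - 1 / x" using x False by (simp add: field_simps abs_if power2_eq_square)
    also have "\<dots> \<le> \<bar>ln x\<bar>"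
      using ln_le_minus_one[of "1/x"] x False by (simp add: ln_div)
    finally show ?thesis using False by (simp add: disc_reflect_def x_def)
  qed
  have "cmod (sgn r ^ m - disc_reflect r ^ m) \<le> m * cmod (sgn r - disc_reflect r)"
    using r by (intro norm_power_diff norm_disc_reflect_le) (auto simp: norm_sgn)
  also have "\<dots> \<le> m * \<bar>ln (cmod r)\<bar>" using d by (intro mult_left_mono) (auto simp: x_def)
  finally show ?thesis .
qed

section \<open>Equidistribution on the unit circle\<close>

text \<open>Real trigonometric polynomials in the form in which they act on the unit circle, where
  \<open>cnj u = 1 / u\<close>.\<close>
inductive trig_poly :: "(complex \<Rightarrow> real) \<Rightarrow> bool" where
  trig_poly_monomial: "trig_poly (\<lambda>u. Re (c * u^j * cnj u ^ k))"
| trig_poly_add: "trig_poly f \<Longrightarrow> trig_poly g \<Longrightarrow> trig_poly (\<lambda>u. f u + g u)"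

lemma trig_poly_mult_monomial: "trig_poly g \<Longrightarrow> trig_poly (\<lambda>u. Re (c * u^j * cnj u ^ k) * g u)"
proof (induction rule: trig_poly.induct)
  case (trig_poly_monomial d j' k')
  have Re_mult: "Re x * Re y = Re (x * y / 2) + Re (x * cnj y / 2)" for x y
    by (simp add: field_simps)
  have e: "Re (c * u^j * cnj u ^ k) * Re (d * u^j' * cnj u ^ k') =
     Re ((c * d / 2) * u^(j+j') * cnj u ^ (k+k')) + Re ((c * cnj d / 2) * u^(j+k') * cnj u ^ (k+j'))"
    for u
    unfolding Re_mult by (simp add: power_add algebra_simps)
  show ?case unfolding e by (intro trig_poly.intros)
next
  case (trig_poly_add f g)
  then show ?case by (simp add: distrib_left trig_poly.trig_poly_add)
qed

lemma trig_poly_mult: "trig_poly f \<Longrightarrow> trig_poly g \<Longrightarrow> trig_poly (\<lambda>u. f u * g u)"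
proof (induction rule: trig_poly.induct)
  case (trig_poly_monomial c j k)
  then show ?case by (rule trig_poly_mult_monomial)
next
  case (trig_poly_add f1 f2)
  then show ?case by (simp add: distrib_right trig_poly.trig_poly_add)
qed

lemma trig_poly_const: "trig_poly (\<lambda>u. a)"
  using trig_poly_monomial[of "of_real a" 0 0] by simp

lemma trig_poly_linear:
  assumes "bounded_linear f" shows "trig_poly f"
proof -
  interpret bounded_linear f by fact
  have e: "f u = Re (of_real (f 1) * u^1 * cnj u^0) + Re ((- \<i> * of_real (f \<i>)) * u^1 * cnj u^0)"
    for u
  proof -
    have "u = Re u *\<^sub>R 1 + Im u *\<^sub>R \<i>" by (simp add: complex_eq_iff)
    moreover have "f (Re u *\<^sub>R 1 + Im u *\<^sub>R \<i>) = Re u * f 1 + Im u * f \<i>" by (simp add: add scale)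
    ultimately show ?thesis by simp
  qed
  show ?thesis by (subst e[abs_def]) (intro trig_poly.intros)
qed

lemma trig_poly_real_polynomial_function: "real_polynomial_function g \<Longrightarrow> trig_poly g"
  by (induction rule: real_polynomial_function.induct)
     (auto intro: trig_poly_linear trig_poly_const trig_poly_mult trig_poly_add)

lemma continuous_on_trig_poly: "trig_poly g \<Longrightarrow> continuous_on UNIV g"
  by (induction rule: trig_poly.induct) (auto intro!: continuous_intros)

definition circle_mean :: "(complex \<Rightarrow> real) \<Rightarrow> real" where
  "circle_mean g = integral {0..2*pi} (\<lambda>t. g (cis t)) / (2*pi)"

lemma integrable_on_cis_comp:
  fixes g :: "complex \<Rightarrow> real"
  assumes "continuous_on UNIV g" shows "(\<lambda>t. g (cis t)) integrable_on {0..2*pi}"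
  by (rule integrable_continuous_interval, rule continuous_on_compose2[OF assms])
     (auto intro: continuous_intros)

lemma Re_monomial_unit_circle:
  fixes u c :: complex assumes u: "cmod u = 1"
  shows "Re (c * u^j * cnj u ^ k) = (if k \<le> j then Re (c * u^(j-k)) else Re (cnj c * u^(k-j)))"
proof -
  have uu: "u * cnj u = 1" using complex_norm_square[of u] u by simp
  show ?thesis
  proof (cases "k \<le> j")
    case True
    have "u^j * cnj u ^ k = u^(j-k) * (u * cnj u)^k"
      using True by (simp add: power_mult_distrib power_add[symmetric])
    then show ?thesis using True uu by (simp add: mult.assoc)
  next
    case False
    have "u^j * cnj u ^ k = cnj u ^ (k-j) * (u * cnj u)^j"
      using False by (simp add: power_mult_distrib power_add[symmetric] mult_ac)
    then have A: "c * u^j * cnj u ^ k = c * cnj u ^ (k-j)" using uu by (simp add: mult.assoc)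
    have B: "Re (c * cnj u ^ (k-j)) = Re (cnj c * u^(k-j))"
      by (metis complex_cnj_cnj complex_cnj_mult complex_cnj_power cnj.simps(1))
    show ?thesis by (simp only: if_not_P[OF False] A B)
  qed
qed

lemma trig_poly_mean_tendsto_circle_mean:
  fixes U :: "nat \<Rightarrow> nat \<Rightarrow> complex"
  assumes U: "eventually (\<lambda>n. \<forall>i<n. cmod (U n i) = 1) sequentially"
    and mom: "\<And>m. m \<ge> 1 \<Longrightarrow> (\<lambda>n. (\<Sum>i<n. U n i ^ m) / of_nat n) \<longlonglongrightarrow> 0"
    and g: "trig_poly g"
  shows "(\<lambda>n. (\<Sum>i<n. g (U n i)) / n) \<longlonglongrightarrow> circle_mean g"
  using g
proof (induction rule: trig_poly.induct)
  case (trig_poly_monomial c j k)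
  define e where "e = (if k \<le> j then j - k else k - j)"
  define d where "d = (if k \<le> j then c else cnj c)"
  have gu: "Re (c * u^j * cnj u ^ k) = Re (d * u^e)" if "cmod u = 1" for u
    using Re_monomial_unit_circle[OF that, of c j k] by (simp add: d_def e_def)
  have sumeq: "eventually (\<lambda>n. Re (d * ((\<Sum>i<n. U n i ^ e) / of_nat n))
      = (\<Sum>i<n. Re (c * U n i ^ j * cnj (U n i) ^ k)) / n) sequentially"
    using U
  proof eventually_elim
    case (elim n)
    have "(\<Sum>i<n. Re (c * U n i ^ j * cnj (U n i) ^ k)) = (\<Sum>i<n. Re (d * U n i ^ e))"
      using elim gu by (intro sum.cong) auto
    also have "\<dots> = Re (d * (\<Sum>i<n. U n i ^ e))" by (simp add: sum_distrib_left)
    finally show ?case by (simp add: Re_divide_of_nat)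
  qed
  have mean: "circle_mean (\<lambda>u. Re (c * u^j * cnj u ^ k))
      = integral {0..2*pi} (\<lambda>t. Re (d * cis (real e * t))) / (2*pi)"
    unfolding circle_mean_def using gu[OF norm_cis] by (simp add: Complex.DeMoivre)
  show ?case
  proof (cases "e = 0")
    case True
    have "eventually (\<lambda>n. Re (d * ((\<Sum>i<n. U n i ^ e) / of_nat n)) = Re d) sequentially"
      using eventually_gt_at_top[of 0] by eventually_elim (simp add: True)
    then have lim: "(\<lambda>n. Re (d * ((\<Sum>i<n. U n i ^ e) / of_nat n))) \<longlonglongrightarrow> Re d"
      by (rule tendsto_eventually)
    have "circle_mean (\<lambda>u. Re (c * u^j * cnj u ^ k)) = Re d" unfolding mean True by simp
    then show ?thesis using Lim_transform_eventually[OF lim sumeq] by (simp only:)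
  next
    case False
    have "(\<lambda>n. d * ((\<Sum>i<n. U n i ^ e) / of_nat n)) \<longlonglongrightarrow> 0"
      using mom[of e] False by (intro tendsto_mult_right_zero) auto
    then have lim: "(\<lambda>n. Re (d * ((\<Sum>i<n. U n i ^ e) / of_nat n))) \<longlonglongrightarrow> 0"
      using tendsto_Re by fastforce
    have "((\<lambda>t. d * cis (real e * t)) has_integral d * 0) {0..2*pi}"
      by (intro has_integral_mult_right has_integral_cis_mult) (use False in auto)
    from has_integral_linear[OF this bounded_linear_Re]
    have "circle_mean (\<lambda>u. Re (c * u^j * cnj u ^ k)) = 0"
      unfolding mean by (simp add: o_def integral_unique)
    then show ?thesis using Lim_transform_eventually[OF lim sumeq] by (simp only:)
  qed
next
  case (trig_poly_add f g)
  then show ?case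
    using integrable_on_cis_comp[OF continuous_on_trig_poly] tendsto_add[OF trig_poly_add.IH]
    by (simp add: circle_mean_def integral_add add_divide_distrib sum.distrib)
qed

lemma abs_mean_diff_le:
  fixes a b l :: "nat \<Rightarrow> real"
  assumes ab: "\<And>i. i < n \<Longrightarrow> \<bar>a i - b i\<bar> \<le> \<eta> + C * l i" and eta: "\<eta> \<ge> 0"
  shows "\<bar>(\<Sum>i<n. a i) / n - (\<Sum>i<n. b i) / n\<bar> \<le> \<eta> + C * ((\<Sum>i<n. l i) / n)"
proof (cases "n = 0")
  case True then show ?thesis using eta by simp
next
  case False
  have "\<bar>(\<Sum>i<n. a i) - (\<Sum>i<n. b i)\<bar> \<le> (\<Sum>i<n. \<bar>a i - b i\<bar>)"
    by (simp add: sum_subtractf[symmetric] sum_abs)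
  also have "\<dots> \<le> (\<Sum>i<n. \<eta> + C * l i)" by (intro sum_mono ab) auto
  also have "\<dots> = n * \<eta> + C * (\<Sum>i<n. l i)" by (simp add: sum.distrib sum_distrib_left)
  finally have "\<bar>(\<Sum>i<n. a i) - (\<Sum>i<n. b i)\<bar> / n \<le> (n * \<eta> + C * (\<Sum>i<n. l i)) / n"
    by (intro divide_right_mono) auto
  then show ?thesis using False by (simp add: diff_divide_distrib[symmetric] add_divide_distrib)
qed

lemma ln_one_plus_le_abs_ln:
  fixes x \<delta> :: real assumes x: "x > 0" and d: "0 < \<delta>" "\<delta> < 1" and far: "\<bar>x - 1\<bar> \<ge> \<delta>"
  shows "ln (1 + \<delta>) \<le> \<bar>ln x\<bar>"
proof (cases "x \<ge> 1")
  case True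
  then show ?thesis using far d by simp
next
  case False
  then have "ln x \<le> ln (1 - \<delta>)" using x far by simp
  also have "\<dots> \<le> - \<delta>" using ln_le_minus_one[of "1 - \<delta>"] d by simp
  finally show ?thesis using ln_le_minus_one[of "1 + \<delta>"] d by simp
qed

text \<open>Near the circle \<open>f r\<close> is close to \<open>f (sgn r)\<close> by uniform continuity; away from it
  \<open>|ln |r||\<close> is bounded below, so the trivial bound \<open>2 B\<close> is absorbed into \<open>C |ln |r||\<close>.\<close>
lemma abs_diff_sgn_le_abs_ln_norm:
  fixes f :: "complex \<Rightarrow> real"
  assumes fc: "continuous_on UNIV f" and B: "\<And>x. \<bar>f x\<bar> \<le> B" and eta: "\<eta> > 0"
  obtains C where "\<And>r. r \<noteq> 0 \<Longrightarrow> \<bar>f r - f (sgn r)\<bar> \<le> \<eta> + C * \<bar>ln (cmod r)\<bar>"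
proof -
  have B0: "B \<ge> 0" using B[of 0] by simp
  have "uniformly_continuous_on (cball (0::complex) 2) f"
    by (rule compact_uniformly_continuous[OF continuous_on_subset[OF fc]]) auto
  then obtain d' where d': "d' > 0" and uc: "\<And>x x'. x \<in> cball 0 2 \<Longrightarrow> x' \<in> cball 0 2 \<Longrightarrow>
      dist x' x < d' \<Longrightarrow> dist (f x') (f x) < \<eta>"
    unfolding uniformly_continuous_on_def using eta by metis
  define \<delta> where "\<delta> = min d' (1/2)"
  have dl: "0 < \<delta>" "\<delta> < 1" "\<delta> \<le> d'" using d' by (auto simp: \<delta>_def)
  define \<kappa> where "\<kappa> = ln (1 + \<delta>)"
  have ka: "\<kappa> > 0" using dl by (simp add: \<kappa>_def)
  have "\<bar>f r - f (sgn r)\<bar> \<le> \<eta> + (2 * B / \<kappa>) * \<bar>ln (cmod r)\<bar>" if r: "r \<noteq> 0" for r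
  proof (cases "\<bar>cmod r - 1\<bar> < \<delta>")
    case True
    have "sgn r - r = r * of_real (1 / cmod r - 1)" using r by (simp add: sgn_eq field_simps)
    then have "dist (sgn r) r = cmod r * \<bar>1 / cmod r - 1\<bar>"
      by (simp only: dist_norm norm_mult norm_of_real)
    also have "\<dots> = \<bar>cmod r - 1\<bar>" using r by (simp add: abs_mult[symmetric] field_simps)
    finally have "dist (f (sgn r)) (f r) < \<eta>"
      using True dl r by (intro uc) (auto simp: norm_sgn)
    moreover have "(2 * B / \<kappa>) * \<bar>ln (cmod r)\<bar> \<ge> 0" using B0 ka by auto
    ultimately show ?thesis by (simp add: dist_real_def abs_minus_commute)
  next
    case False
    have "\<kappa> \<le> \<bar>ln (cmod r)\<bar>" unfolding \<kappa>_def using False dl r by (intro ln_one_plus_le_abs_ln) auto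
    then have "(2 * B / \<kappa>) * \<kappa> \<le> (2 * B / \<kappa>) * \<bar>ln (cmod r)\<bar>" using B0 ka by (intro mult_left_mono) auto
    then show ?thesis using B[of r] B[of "sgn r"] eta ka by simp
  qed
  then show ?thesis by (rule that)
qed

lemma sgn_power_mean_tendsto_0:
  fixes rt :: "nat \<Rightarrow> nat \<Rightarrow> complex"
  assumes nz: "eventually (\<lambda>n. \<forall>i<n. rt n i \<noteq> 0) sequentially"
    and lam: "(\<lambda>n. (\<Sum>i<n. \<bar>ln (cmod (rt n i))\<bar>) / n) \<longlonglongrightarrow> 0"
    and mom: "(\<lambda>n. cmod (\<Sum>i<n. disc_reflect (rt n i) ^ m) / n) \<longlonglongrightarrow> 0"
  shows "(\<lambda>n. (\<Sum>i<n. sgn (rt n i) ^ m) / of_nat n) \<longlonglongrightarrow> 0"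
proof (rule Lim_null_comparison)
  show "eventually (\<lambda>n. norm ((\<Sum>i<n. sgn (rt n i) ^ m) / of_nat n) \<le>
      cmod (\<Sum>i<n. disc_reflect (rt n i) ^ m) / n + m * ((\<Sum>i<n. \<bar>ln (cmod (rt n i))\<bar>) / n))
      sequentially"
    using nz
  proof eventually_elim
    case (elim n)
    have "(\<Sum>i<n. sgn (rt n i) ^ m) = (\<Sum>i<n. disc_reflect (rt n i) ^ m)
        + (\<Sum>i<n. (sgn (rt n i) ^ m - disc_reflect (rt n i) ^ m))"
      by (simp add: sum_subtractf)
    then have "cmod (\<Sum>i<n. sgn (rt n i) ^ m)
        \<le> cmod (\<Sum>i<n. disc_reflect (rt n i) ^ m)
          + cmod (\<Sum>i<n. (sgn (rt n i) ^ m - disc_reflect (rt n i) ^ m))"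
      by (simp only: norm_triangle_ineq)
    also have "cmod (\<Sum>i<n. (sgn (rt n i) ^ m - disc_reflect (rt n i) ^ m))
        \<le> (\<Sum>i<n. m * \<bar>ln (cmod (rt n i))\<bar>)"
      using elim by (intro order_trans[OF norm_sum] sum_mono norm_sgn_power_minus_disc_reflect_power_le)
        auto
    finally have "cmod (\<Sum>i<n. sgn (rt n i) ^ m) / n
        \<le> (cmod (\<Sum>i<n. disc_reflect (rt n i) ^ m) + m * (\<Sum>i<n. \<bar>ln (cmod (rt n i))\<bar>)) / n"
      by (intro divide_right_mono) (auto simp: sum_distrib_left)
    then show ?case by (simp add: norm_divide add_divide_distrib)
  qed
  show "(\<lambda>n. cmod (\<Sum>i<n. disc_reflect (rt n i) ^ m) / n
      + m * ((\<Sum>i<n. \<bar>ln (cmod (rt n i))\<bar>) / n)) \<longlonglongrightarrow> 0"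
    using mom lam by (intro tendsto_add_zero tendsto_mult_right_zero)
qed

lemma abs_circle_mean_diff_le:
  fixes f g :: "complex \<Rightarrow> real"
  assumes fc: "continuous_on UNIV f" and gc: "continuous_on UNIV g"
    and fg: "\<And>x. x \<in> sphere 0 1 \<Longrightarrow> \<bar>f x - g x\<bar> \<le> \<eta>"
  shows "\<bar>circle_mean f - circle_mean g\<bar> \<le> \<eta>"
proof -
  have intf: "(\<lambda>t. f (cis t)) integrable_on {0..2*pi}" by (rule integrable_on_cis_comp[OF fc])
  have intg: "(\<lambda>t. g (cis t)) integrable_on {0..2*pi}" by (rule integrable_on_cis_comp[OF gc])
  have "norm (integral {0..2*pi} (\<lambda>t. f (cis t) - g (cis t))) \<le> integral {0..2*pi} (\<lambda>t. \<eta>)"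
    using fg[of "cis _"] by (intro integral_norm_bound_integral integrable_diff intf intg) auto
  then have "\<bar>integral {0..2*pi} (\<lambda>t. f (cis t)) - integral {0..2*pi} (\<lambda>t. g (cis t))\<bar>
      \<le> 2 * pi * \<eta>"
    using intf intg by (simp add: integral_diff)
  then show ?thesis unfolding circle_mean_def by (simp add: diff_divide_distrib[symmetric] field_simps)
qed

text \<open>An \<open>e/5\<close>-argument: compare \<open>f (rt n i)\<close> with \<open>f (sgn (rt n i))\<close>, then with
  \<open>g (sgn (rt n i))\<close> for a polynomial \<open>g\<close> uniformly close to \<open>f\<close> on the circle.\<close>
theorem mean_tendsto_circle_mean_of_roots:
  fixes rt :: "nat \<Rightarrow> nat \<Rightarrow> complex" and f :: "complex \<Rightarrow> real"
  assumes nz: "eventually (\<lambda>n. \<forall>i<n. rt n i \<noteq> 0) sequentially"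
    and lam: "(\<lambda>n. (\<Sum>i<n. \<bar>ln (cmod (rt n i))\<bar>) / n) \<longlonglongrightarrow> 0"
    and mom: "\<And>m. m \<ge> 1 \<Longrightarrow> (\<lambda>n. cmod (\<Sum>i<n. disc_reflect (rt n i) ^ m) / n) \<longlonglongrightarrow> 0"
    and fc: "continuous_on UNIV f" and fb: "bounded (range f)"
  shows "(\<lambda>n. (\<Sum>i<n. f (rt n i)) / n) \<longlonglongrightarrow> circle_mean f"
  unfolding tendsto_iff
proof (intro allI impI)
  fix e :: real assume e: "e > 0"
  define \<eta> where "\<eta> = e / 5"
  have eta: "\<eta> > 0" using e by (simp add: \<eta>_def)
  have unit: "eventually (\<lambda>n. \<forall>i<n. cmod (sgn (rt n i)) = 1) sequentially"
    using nz by eventually_elim (simp add: norm_sgn)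
  have "\<exists>g. polynomial_function g \<and> (\<forall>x\<in>sphere (0::complex) 1. norm (f x - g x) < \<eta>)"
    by (rule Stone_Weierstrass_polynomial_function[OF compact_sphere
        continuous_on_subset[OF fc subset_UNIV] eta])
  then obtain g where gp: "polynomial_function g"
    and gf: "\<And>x. x \<in> sphere 0 1 \<Longrightarrow> norm (f x - g x) < \<eta>"
    by blast
  have tpg: "trig_poly g"
    using gp by (simp add: real_polynomial_function_eq[symmetric] trig_poly_real_polynomial_function)
  obtain B where B: "\<And>x. \<bar>f x\<bar> \<le> B" using fb unfolding bounded_iff by auto
  obtain C where pt: "\<And>r. r \<noteq> 0 \<Longrightarrow> \<bar>f r - f (sgn r)\<bar> \<le> \<eta> + C * \<bar>ln (cmod r)\<bar>"
    using abs_diff_sgn_le_abs_ln_norm[OF fc B eta] by blast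
  have ev1: "eventually (\<lambda>n. C * ((\<Sum>i<n. \<bar>ln (cmod (rt n i))\<bar>) / n) < \<eta>) sequentially"
    using tendsto_mult_right_zero[OF lam, of C] eta by (rule order_tendstoD)
  have ev2: "eventually (\<lambda>n. \<bar>(\<Sum>i<n. g (sgn (rt n i))) / n - circle_mean g\<bar> < \<eta>) sequentially"
    using trig_poly_mean_tendsto_circle_mean[OF unit sgn_power_mean_tendsto_0[OF nz lam mom] tpg] eta
    unfolding tendsto_iff dist_real_def by auto
  have mean_gf: "\<bar>circle_mean g - circle_mean f\<bar> \<le> \<eta>"
    using gf by (intro abs_circle_mean_diff_le continuous_on_trig_poly[OF tpg] fc)
      (fastforce simp: abs_minus_commute intro: less_imp_le)
  show "eventually (\<lambda>n. dist ((\<Sum>i<n. f (rt n i)) / n) (circle_mean f) < e) sequentially"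
    using nz ev1 ev2
  proof eventually_elim
    case (elim n)
    have "\<bar>(\<Sum>i<n. f (rt n i)) / n - (\<Sum>i<n. f (sgn (rt n i))) / n\<bar>
        \<le> \<eta> + C * ((\<Sum>i<n. \<bar>ln (cmod (rt n i))\<bar>) / n)"
      using elim(1) pt eta by (intro abs_mean_diff_le) auto
    moreover have "\<bar>(\<Sum>i<n. f (sgn (rt n i))) / n - (\<Sum>i<n. g (sgn (rt n i))) / n\<bar>
        \<le> \<eta> + 0 * ((\<Sum>i<n. 0) / n)"
    proof (rule abs_mean_diff_le)
      fix i assume "i < n"
      then have "sgn (rt n i) \<in> sphere 0 1" using elim(1) by (simp add: norm_sgn)
      then show "\<bar>f (sgn (rt n i)) - g (sgn (rt n i))\<bar> \<le> \<eta> + 0 * 0" using gf by fastforce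
    qed (use eta in auto)
    ultimately show ?case unfolding dist_real_def using elim(2,3) mean_gf \<eta>_def
      by linarith
  qed
qed

section \<open>Zero counting measures of polynomials\<close>

lemma poly_rand_poly: "poly (rand_poly A n \<omega>) z = (\<Sum>k\<le>n. A k \<omega> * z^k)"
  by (simp add: rand_poly_def poly_sum poly_monom)

lemma poly_rand_poly_0: "poly (rand_poly A n \<omega>) 0 = A 0 \<omega>"
  by (simp add: poly_rand_poly zero_power)

lemma coeff_rand_poly: "coeff (rand_poly A n \<omega>) k = (if k \<le> n then A k \<omega> else 0)"
  by (simp add: rand_poly_def coeff_sum coeff_monom)

lemma degree_rand_poly: "A n \<omega> \<noteq> 0 \<Longrightarrow> degree (rand_poly A n \<omega>) = n"
  by (rule antisym) (auto intro!: degree_le le_degree simp: coeff_rand_poly)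

lemma norm_poly_rand_poly_le:
  "cmod z = 1 \<Longrightarrow> cmod (poly (rand_poly A n \<omega>) z) \<le> (\<Sum>k\<le>n. cmod (A k \<omega>))"
  unfolding poly_rand_poly by (rule order_trans[OF norm_sum]) (simp add: norm_mult norm_power)

lemma complex_poly_factorization_nonzero_roots:
  fixes p :: "complex poly"
  assumes p0: "poly p 0 \<noteq> 0"
  obtains r where "\<And>i. i < degree p \<Longrightarrow> r i \<noteq> 0"
    and "\<And>z. poly p z = lead_coeff p * (\<Prod>i<degree p. (z - r i))"
    and "proots p = (\<Sum>i<degree p. {#r i#})"
proof -
  obtain r where r: "smult (lead_coeff p) (\<Prod>i<degree p. [:-r i, 1:]) = p"
    by (rule complex_poly_decompose')
  have p: "p \<noteq> 0" using p0 by auto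
  have poly_p: "poly p z = lead_coeff p * (\<Prod>i<degree p. (z - r i))" for z
    using arg_cong[OF r, of "\<lambda>q. poly q z"] by (simp add: poly_prod)
  moreover have "r i \<noteq> 0" if "i < degree p" for i
    using p0 that unfolding poly_p by (auto simp: prod_zero_iff)
  moreover have "proots p = (\<Sum>i<degree p. {#r i#})"
  proof -
    have "proots p = proots (\<Prod>i<degree p. [:-r i, 1:])"
      using r p by (metis proots_smult leading_coeff_0_iff)
    also have "\<dots> = (\<Sum>i<degree p. proots [:-r i, 1:])" by (rule proots_prod) auto
    finally show ?thesis by simp
  qed
  ultimately show ?thesis using that by blast
qed

lemma sum_mult_count_eq_sum_mset:
  fixes f :: "'a \<Rightarrow> real"
  assumes "finite A" "set_mset R \<subseteq> A"
  shows "(\<Sum>a\<in>A. f a * real (count R a)) = sum_mset (image_mset f R)"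
  using assms(2)
proof (induction R)
  case empty then show ?case by simp
next
  case (add x R)
  have "(\<Sum>a\<in>A. f a * real (count (add_mset x R) a))
      = (\<Sum>a\<in>A. f a * real (count R a)) + (\<Sum>a\<in>A. if a = x then f a else 0)"
    by (simp add: sum.distrib[symmetric]) (intro sum.cong, auto simp: algebra_simps)
  also have "(\<Sum>a\<in>A. if a = x then f a else 0) = f x" using add.prems assms(1) by (simp add: sum.delta)
  finally show ?case using add by simp
qed

text \<open>The zero counting measure is the law of a uniformly chosen zero, counted with multiplicity.\<close>
lemma integral_zero_counting_measure:
  fixes p :: "complex poly" and f :: "complex \<Rightarrow> real"
  assumes p: "p \<noteq> 0" and n: "size (proots p) = n" "n > 0" and f: "f \<in> borel_measurable borel"
  shows "integral\<^sup>L (zero_counting_measure n p) f = sum_mset (image_mset f (proots p)) / n"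
proof -
  define R where "R = proots p"
  have R: "R \<noteq> {#}" using n by (auto simp: R_def)
  define P where "P = pmf_of_multiset R"
  define N where "N = distr (measure_pmf P) borel (\<lambda>x. x)"
  have pmfP: "pmf P x = real (count R x) / n" for x using R n by (simp add: P_def R_def)
  have setP: "set_pmf P = set_mset R" using R by (simp add: P_def)
  have "zero_counting_measure n p = N"
  proof -
    have N: "N = measure_of UNIV (sets borel) (emeasure N)"
      using measure_of_of_measure[of N] by (simp add: N_def)
    show ?thesis unfolding zero_counting_measure_def
    proof (subst N, rule measure_of_eq)
      show "sets borel \<subseteq> Pow UNIV" by simp
      fix a assume "a \<in> sigma_sets UNIV (sets (borel :: complex measure))"
      then have a: "a \<in> sets borel" using sets.sigma_sets_eq[of "borel :: complex measure"] by simp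
      have "emeasure N a = emeasure (measure_pmf P) (a \<inter> set_mset R)"
        unfolding N_def using emeasure_Int_set_pmf[of P a] setP a by (simp add: emeasure_distr)
      also have "\<dots> = ennreal (\<Sum>s\<in>a \<inter> set_mset R. pmf P s)"
        using emeasure_measure_pmf_finite[of "a \<inter> set_mset R" P] by (simp add: sum_ennreal)
      also have "(\<Sum>s\<in>a \<inter> set_mset R. pmf P s)
          = (\<Sum>z\<in>{z. poly p z = 0} \<inter> a. real (order z p)) / real n"
        using p by (simp add: pmfP R_def sum_divide_distrib Int_commute)
      finally show "ennreal ((\<Sum>z\<in>{z. poly p z = 0} \<inter> a. real (order z p)) / real n)
          = emeasure N a" by simp
    qed
  qed
  then have "integral\<^sup>L (zero_counting_measure n p) f = integral\<^sup>L (measure_pmf P) f"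
    unfolding N_def by (simp add: integral_distr f)
  also have "\<dots> = (\<Sum>a\<in>set_mset R. f a * pmf P a)"
    by (rule integral_measure_pmf_real) (use setP in auto)
  also have "\<dots> = (\<Sum>a\<in>set_mset R. f a * real (count R a)) / n"
    by (simp add: pmfP sum_divide_distrib)
  also have "\<dots> = sum_mset (image_mset f R) / n"
    by (subst sum_mult_count_eq_sum_mset) auto
  finally show ?thesis by (simp add: R_def)
qed

lemma integral_unit_circle_measure:
  fixes f :: "complex \<Rightarrow> real"
  assumes f: "continuous_on UNIV f"
  shows "integral\<^sup>L unit_circle_measure f = circle_mean f"
proof -
  have fm: "f \<in> borel_measurable borel" using f by (simp add: borel_measurable_continuous_onI)
  have fcis: "continuous_on UNIV (\<lambda>t. f (cis t))"
    by (intro continuous_on_compose2[OF f] continuous_intros) auto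
  have "cis \<in> borel_measurable (uniform_measure lborel {0..2*pi})"
    using borel_measurable_continuous_onI[OF continuous_on_cis[OF continuous_on_id]]
    by (simp cong: measurable_cong_sets)
  then have "integral\<^sup>L unit_circle_measure f
      = integral\<^sup>L (uniform_measure lborel {0..2*pi}) (\<lambda>t. f (cis t))"
    unfolding unit_circle_measure_def by (simp add: integral_distr fm)
  also have "uniform_measure lborel {0..2*pi}
      = density lborel (\<lambda>x. ennreal (indicator {0..2*pi} x / (2*pi)))"
    using divide_ennreal[of 1 "2*pi"] unfolding uniform_measure_def
    by (intro density_cong) (auto simp: indicator_def ennreal_mult)
  also have "integral\<^sup>L \<dots> (\<lambda>t. f (cis t))
      = integral\<^sup>L lborel (\<lambda>x. (indicator {0..2*pi} x / (2*pi)) *\<^sub>R f (cis x))"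
    using fcis by (intro integral_density) (auto simp: borel_measurable_continuous_onI)
  also have "\<dots> = (LINT x : {0..2*pi} | lborel. f (cis x)) / (2*pi)"
    by (simp add: set_lebesgue_integral_def)
  also have "(LINT x : {0..2*pi} | lborel. f (cis x)) = integral {0..2*pi} (\<lambda>t. f (cis t))"
    by (rule set_borel_integral_eq_integral(2)[OF borel_integrable_atLeastAtMost'])
       (rule continuous_on_subset[OF fcis subset_UNIV])
  finally show ?thesis unfolding circle_mean_def .
qed

lemma integral_zero_counting_measure_roots:
  fixes p :: "complex poly" and f :: "complex \<Rightarrow> real" and r :: "nat \<Rightarrow> complex"
  assumes "p \<noteq> 0" "proots p = (\<Sum>i<n. {#r i#})" "n > 0" "f \<in> borel_measurable borel"
  shows "integral\<^sup>L (zero_counting_measure n p) f = (\<Sum>i<n. f (r i)) / n"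
proof -
  have "size (\<Sum>i<k. {#r i#}) = k" "sum_mset (image_mset f (\<Sum>i<k. {#r i#})) = (\<Sum>i<k. f (r i))"
    for k by (induction k) (auto simp: add.commute)
  then show ?thesis using assms by (simp add: integral_zero_counting_measure)
qed

text \<open>Here \<open>\<Sum>k\<le>n. |A k|\<close> plays the role of the bound \<open>L\<close> of \<open>P n\<close> on the unit circle.\<close>
lemma rand_poly_roots:
  fixes A :: "nat \<Rightarrow> 'a \<Rightarrow> complex"
  assumes a0: "A 0 \<omega> \<noteq> 0" and an: "A n \<omega> \<noteq> 0"
  shows "\<exists>r. (\<forall>i<n. r i \<noteq> 0) \<and> proots (rand_poly A n \<omega>) = (\<Sum>i<n. {#r i#})
    \<and> (\<Sum>i<n. \<bar>ln (cmod (r i))\<bar>)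
      \<le> ln ((\<Sum>k\<le>n. cmod (A k \<omega>)) / cmod (A n \<omega>)) + ln ((\<Sum>k\<le>n. cmod (A k \<omega>)) / cmod (A 0 \<omega>))
    \<and> (\<forall>m\<ge>1. cmod (\<Sum>i<n. disc_reflect (r i) ^ m)
      \<le> 4 * real m * 2^m * ln ((\<Sum>k\<le>n. cmod (A k \<omega>)) / cmod (A n \<omega>)))"
proof -
  define p where "p = rand_poly A n \<omega>"
  have deg: "degree p = n" and lead: "lead_coeff p = A n \<omega>" and p0: "poly p 0 \<noteq> 0"
    using a0 an by (simp_all add: p_def degree_rand_poly coeff_rand_poly poly_rand_poly_0)
  obtain r where nz: "\<And>i. i < n \<Longrightarrow> r i \<noteq> 0"
    and poly_p: "\<And>z. poly p z = A n \<omega> * (\<Prod>i<n. (z - r i))"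
    and proots_p: "proots p = (\<Sum>i<n. {#r i#})"
    using complex_poly_factorization_nonzero_roots[OF p0, unfolded lead, unfolded deg] by blast
  have circ: "cmod (A n \<omega> * (\<Prod>i<n. (\<zeta> - r i))) \<le> (\<Sum>k\<le>n. cmod (A k \<omega>))" if "cmod \<zeta> = 1" for \<zeta>
    using norm_poly_rand_poly_le[OF that, of A n \<omega>] poly_p by (simp add: p_def)
  have "cmod (A n \<omega>) * (\<Prod>i<n. cmod (r i)) = cmod (A 0 \<omega>)"
    using poly_p[of 0] by (simp add: p_def poly_rand_poly_0 norm_mult prod_norm[symmetric])
  then show ?thesis
    using nz proots_p sum_abs_ln_norm_le[OF nz an circ] norm_power_sum_disc_reflect_le[OF nz an circ]
    unfolding p_def by (intro exI[of _ r]) auto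
qed

theorem weak_conv_zero_counting_rand_poly:
  fixes A :: "nat \<Rightarrow> 'a \<Rightarrow> complex" and \<omega> :: 'a
  assumes a0: "A 0 \<omega> \<noteq> 0"
    and an: "eventually (\<lambda>n. A n \<omega> \<noteq> 0) sequentially"
    and e1: "(\<lambda>n. ln ((\<Sum>k\<le>n. cmod (A k \<omega>)) / cmod (A n \<omega>)) / n) \<longlonglongrightarrow> 0"
    and e2: "(\<lambda>n. ln ((\<Sum>k\<le>n. cmod (A k \<omega>)) / cmod (A 0 \<omega>)) / n) \<longlonglongrightarrow> 0"
  shows "weak_conv_c (\<lambda>n. zero_counting_measure n (rand_poly A n \<omega>)) unit_circle_measure"
proof -
  define l1 where "l1 n = ln ((\<Sum>k\<le>n. cmod (A k \<omega>)) / cmod (A n \<omega>))" for n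
  define l2 where "l2 n = ln ((\<Sum>k\<le>n. cmod (A k \<omega>)) / cmod (A 0 \<omega>))" for n
  have "\<forall>n. \<exists>r. A n \<omega> \<noteq> 0 \<longrightarrow> (\<forall>i<n. r i \<noteq> 0)
      \<and> proots (rand_poly A n \<omega>) = (\<Sum>i<n. {#r i#})
      \<and> (\<Sum>i<n. \<bar>ln (cmod (r i))\<bar>) \<le> l1 n + l2 n
      \<and> (\<forall>m\<ge>1. cmod (\<Sum>i<n. disc_reflect (r i) ^ m) \<le> 4 * real m * 2^m * l1 n)"
    using rand_poly_roots[where A = A and \<omega> = \<omega>, OF a0] unfolding l1_def l2_def by blast
  from choice[OF this] obtain rt where rt: "\<forall>n. A n \<omega> \<noteq> 0 \<longrightarrow> (\<forall>i<n. rt n i \<noteq> 0)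
      \<and> proots (rand_poly A n \<omega>) = (\<Sum>i<n. {#rt n i#})
      \<and> (\<Sum>i<n. \<bar>ln (cmod (rt n i))\<bar>) \<le> l1 n + l2 n
      \<and> (\<forall>m\<ge>1. cmod (\<Sum>i<n. disc_reflect (rt n i) ^ m) \<le> 4 * real m * 2^m * l1 n)"
    by blast
  have lam: "(\<lambda>n. (\<Sum>i<n. \<bar>ln (cmod (rt n i))\<bar>) / n) \<longlonglongrightarrow> 0"
  proof (rule tendsto_sandwich[of "\<lambda>n. 0" _ _ "\<lambda>n. l1 n / n + l2 n / n"])
    show "eventually (\<lambda>n. (\<Sum>i<n. \<bar>ln (cmod (rt n i))\<bar>) / n \<le> l1 n / n + l2 n / n) sequentially"
      using an by eventually_elim (use rt in \<open>auto simp flip: add_divide_distrib intro: divide_right_mono\<close>)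
  qed (use tendsto_add[OF e1 e2] in \<open>auto simp: l1_def l2_def\<close>)
  have mom: "(\<lambda>n. cmod (\<Sum>i<n. disc_reflect (rt n i) ^ m) / n) \<longlonglongrightarrow> 0" if m: "m \<ge> 1" for m
  proof (rule tendsto_sandwich[of "\<lambda>n. 0" _ _ "\<lambda>n. (4 * real m * 2^m) * (l1 n / n)"])
    show "eventually (\<lambda>n. cmod (\<Sum>i<n. disc_reflect (rt n i) ^ m) / n
        \<le> (4 * real m * 2^m) * (l1 n / n)) sequentially"
      using an by eventually_elim (use rt m in \<open>auto intro: divide_right_mono\<close>)
  qed (use tendsto_mult_right_zero[OF e1] in \<open>auto simp: l1_def\<close>)
  have nz: "eventually (\<lambda>n. \<forall>i<n. rt n i \<noteq> 0) sequentially"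
    using an by eventually_elim (use rt in blast)
  show ?thesis unfolding weak_conv_c_def
  proof (intro allI impI)
    fix f :: "complex \<Rightarrow> real" assume f: "continuous_on UNIV f \<and> bounded (range f)"
    have "eventually (\<lambda>n. (\<Sum>i<n. f (rt n i)) / n
        = integral\<^sup>L (zero_counting_measure n (rand_poly A n \<omega>)) f) sequentially"
      using an eventually_gt_at_top[of 0]
    proof eventually_elim
      case (elim n)
      have "rand_poly A n \<omega> \<noteq> 0" using elim(1) by (metis coeff_0 coeff_rand_poly order_refl)
      then show ?case
        using rt elim f
        by (subst integral_zero_counting_measure_roots) (auto simp: borel_measurable_continuous_onI)
    qed
    then show "(\<lambda>n. integral\<^sup>L (zero_counting_measure n (rand_poly A n \<omega>)) f)
        \<longlonglongrightarrow> integral\<^sup>L unit_circle_measure f"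
      using mean_tendsto_circle_mean_of_roots[OF nz lam mom] integral_unit_circle_measure f
      by (auto intro: Lim_transform_eventually)
  qed
qed

section \<open>Coefficients of subexponential size\<close>

lemma tendsto_0_of_eventually_small:
  fixes x :: "nat \<Rightarrow> real"
  assumes "\<And>\<epsilon>. \<epsilon> > 0 \<Longrightarrow> eventually (\<lambda>n. 0 \<le> x n \<and> x n \<le> \<epsilon>) sequentially"
  shows "x \<longlonglongrightarrow> 0"
  unfolding tendsto_iff
proof (intro allI impI)
  fix e :: real assume e: "e > 0"
  show "eventually (\<lambda>n. dist (x n) 0 < e) sequentially"
    using assms[of "e/2"] e by (auto elim: eventually_mono)
qed

lemma eventually_ln_sum_le:
  fixes a :: "nat \<Rightarrow> real" and \<epsilon> :: real
  assumes nn: "\<And>k. a k \<ge> 0" and a0: "a 0 > 0"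
    and up: "\<And>\<epsilon>::real. \<epsilon> > 0 \<Longrightarrow> eventually (\<lambda>n. a n \<le> exp (\<epsilon> * n)) sequentially"
    and e: "\<epsilon> > 0"
  shows "eventually (\<lambda>n. ln (\<Sum>k\<le>n. a k) \<le> \<epsilon> * n) sequentially"
proof -
  define \<delta> where "\<delta> = \<epsilon> / 2"
  have d: "\<delta> > 0" using e by (simp add: \<delta>_def)
  obtain K where K: "\<And>n. n \<ge> K \<Longrightarrow> a n \<le> exp (\<delta> * n)"
    using up[OF d] unfolding eventually_sequentially by blast
  define C where "C = (\<Sum>k<K. a k)"
  have C: "C \<ge> 0" unfolding C_def using nn by (simp add: sum_nonneg)
  have Sb: "(\<Sum>k\<le>n. a k) \<le> (C + 1) * (real n + 1) * exp (\<delta> * n)" for n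
  proof -
    have "(\<Sum>k\<le>n. a k) \<le> (\<Sum>k\<le>n. (if k < K then a k else 0) + exp (\<delta> * n))"
    proof (intro sum_mono)
      fix k assume k: "k \<in> {..n}"
      show "a k \<le> (if k < K then a k else 0) + exp (\<delta> * n)"
      proof (cases "k < K")
        case False
        then have "a k \<le> exp (\<delta> * k)" using K by simp
        also have "\<dots> \<le> exp (\<delta> * n)" using k d by auto
        finally show ?thesis using False by simp
      qed simp
    qed
    also have "\<dots> = (\<Sum>k\<le>n. (if k < K then a k else 0)) + (n + 1) * exp (\<delta> * n)"
      by (simp add: sum.distrib)
    also have "(\<Sum>k\<le>n. (if k < K then a k else 0)) = (\<Sum>k\<in>{..n} \<inter> {..<K}. a k)"
      by (subst sum.inter_restrict) auto
    also have "\<dots> \<le> C" unfolding C_def using nn by (intro sum_mono2) auto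
    also have "C + (n + 1) * exp (\<delta> * n) \<le> (C + 1) * (real n + 1) * exp (\<delta> * n)"
    proof -
      have "1 * 1 \<le> (real n + 1) * exp (\<delta> * n)" using d by (intro mult_mono) auto
      then have "C * 1 \<le> C * ((real n + 1) * exp (\<delta> * n))" using C by (intro mult_left_mono) auto
      then show ?thesis by (simp add: algebra_simps)
    qed
    finally show ?thesis by simp
  qed
  have lnS: "ln (\<Sum>k\<le>n. a k) \<le> ln (C + 1) + ln (real n + 1) + \<delta> * n" for n
  proof -
    have "0 < (\<Sum>k\<le>n. a k)" using a0 nn by (intro sum_pos2[of _ 0]) auto
    then have "ln (\<Sum>k\<le>n. a k) \<le> ln ((C + 1) * (real n + 1) * exp (\<delta> * n))"
      using Sb[of n] by (subst ln_le_cancel_iff) auto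
    also have "\<dots> = ln (C + 1) + ln (real n + 1) + \<delta> * n" using C by (simp add: ln_mult_pos)
    finally show ?thesis .
  qed
  have "(\<lambda>n. (ln (C + 1) + ln (real n + 1)) / real n) \<longlonglongrightarrow> 0" by real_asymp
  then have "eventually (\<lambda>n. (ln (C + 1) + ln (real n + 1)) / real n < \<delta>) sequentially"
    using d by (rule order_tendstoD)
  then show ?thesis using eventually_gt_at_top[of 0]
  proof eventually_elim
    case (elim n) then show ?case using lnS[of n] by (simp add: \<delta>_def divide_less_eq)
  qed
qed

lemma ln_sum_div_last_tendsto_0:
  fixes a :: "nat \<Rightarrow> real"
  assumes nn: "\<And>k. a k \<ge> 0" and a0: "a 0 > 0"
    and up: "\<And>\<epsilon>::real. \<epsilon> > 0 \<Longrightarrow> eventually (\<lambda>n. a n \<le> exp (\<epsilon> * n)) sequentially"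
    and low: "\<And>\<epsilon>::real. \<epsilon> > 0 \<Longrightarrow> eventually (\<lambda>n. exp (- (\<epsilon> * n)) \<le> a n) sequentially"
  shows "(\<lambda>n. ln ((\<Sum>k\<le>n. a k) / a n) / n) \<longlonglongrightarrow> 0"
proof (rule tendsto_0_of_eventually_small)
  fix \<epsilon> :: real assume e: "\<epsilon> > 0"
  then have e2: "\<epsilon> / 2 > 0" by simp
  have sum_le: "eventually (\<lambda>n. ln (\<Sum>k\<le>n. a k) \<le> \<epsilon> / 2 * n) sequentially"
    using nn a0 up e2 by (intro eventually_ln_sum_le) auto
  show "eventually (\<lambda>n. 0 \<le> ln ((\<Sum>k\<le>n. a k) / a n) / n \<and> ln ((\<Sum>k\<le>n. a k) / a n) / n \<le> \<epsilon>)
      sequentially"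
    using sum_le low[OF e2] eventually_gt_at_top[of 0]
  proof eventually_elim
    case (elim n)
    have an: "a n > 0" using elim(2) by (smt (verit) exp_gt_zero)
    have "a n \<le> (\<Sum>k\<le>n. a k)" using nn by (intro member_le_sum) auto
    then have "0 \<le> ln ((\<Sum>k\<le>n. a k) / a n)" using an by simp
    moreover have "ln ((\<Sum>k\<le>n. a k) / a n) = ln (\<Sum>k\<le>n. a k) - ln (a n)"
      using an \<open>a n \<le> (\<Sum>k\<le>n. a k)\<close> by (intro ln_divide_pos) auto
    moreover have "- (\<epsilon> / 2 * n) \<le> ln (a n)" using elim(2) an by (metis ln_exp ln_le_cancel_iff exp_gt_zero)
    ultimately show ?case using elim(1,3) by (auto simp: divide_le_eq)
  qed
qed

lemma ln_sum_div_first_tendsto_0: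
  fixes a :: "nat \<Rightarrow> real"
  assumes nn: "\<And>k. a k \<ge> 0" and a0: "a 0 > 0"
    and up: "\<And>\<epsilon>::real. \<epsilon> > 0 \<Longrightarrow> eventually (\<lambda>n. a n \<le> exp (\<epsilon> * n)) sequentially"
  shows "(\<lambda>n. ln ((\<Sum>k\<le>n. a k) / a 0) / n) \<longlonglongrightarrow> 0"
proof (rule tendsto_0_of_eventually_small)
  fix \<epsilon> :: real assume e: "\<epsilon> > 0"
  then have e2: "\<epsilon> / 2 > 0" by simp
  have sum_le: "eventually (\<lambda>n. ln (\<Sum>k\<le>n. a k) \<le> \<epsilon> / 2 * n) sequentially"
    using nn a0 up e2 by (intro eventually_ln_sum_le) auto
  have "(\<lambda>n. - ln (a 0) / real n) \<longlonglongrightarrow> 0" by real_asymp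
  then have "eventually (\<lambda>n. - ln (a 0) / real n < \<epsilon> / 2) sequentially"
    using e by (intro order_tendstoD) auto
  then show "eventually (\<lambda>n. 0 \<le> ln ((\<Sum>k\<le>n. a k) / a 0) / n \<and> ln ((\<Sum>k\<le>n. a k) / a 0) / n \<le> \<epsilon>)
      sequentially"
    using sum_le eventually_gt_at_top[of 0]
  proof eventually_elim
    case (elim n)
    have "a 0 \<le> (\<Sum>k\<le>n. a k)" using nn by (intro member_le_sum) auto
    then have "0 \<le> ln ((\<Sum>k\<le>n. a k) / a 0)" using a0 by simp
    moreover have "ln ((\<Sum>k\<le>n. a k) / a 0) = ln (\<Sum>k\<le>n. a k) - ln (a 0)"
      using a0 \<open>a 0 \<le> (\<Sum>k\<le>n. a k)\<close> by (intro ln_divide_pos) auto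
    moreover have "- ln (a 0) < \<epsilon> / 2 * n" using elim(1,3) by (subst (asm) pos_divide_less_eq) auto
    ultimately show ?case using elim(2,3) by (auto simp: divide_le_eq)
  qed
qed

theorem weak_conv_zero_counting_rand_poly_subexponential:
  fixes A :: "nat \<Rightarrow> 'a \<Rightarrow> complex" and \<omega> :: 'a
  assumes a0: "A 0 \<omega> \<noteq> 0"
    and up: "\<And>\<epsilon>::real. \<epsilon> > 0 \<Longrightarrow> eventually (\<lambda>n. cmod (A n \<omega>) \<le> exp (\<epsilon> * n)) sequentially"
    and low: "\<And>\<epsilon>::real. \<epsilon> > 0 \<Longrightarrow> eventually (\<lambda>n. exp (- (\<epsilon> * n)) \<le> cmod (A n \<omega>)) sequentially"
  shows "weak_conv_c (\<lambda>n. zero_counting_measure n (rand_poly A n \<omega>)) unit_circle_measure"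
proof (rule weak_conv_zero_counting_rand_poly)
  show "A 0 \<omega> \<noteq> 0" by (rule a0)
  show "eventually (\<lambda>n. A n \<omega> \<noteq> 0) sequentially"
    using low[of 1] by (rule eventually_mono) (auto dest: order.strict_trans2[OF exp_gt_zero])
  show "(\<lambda>n. ln ((\<Sum>k\<le>n. cmod (A k \<omega>)) / cmod (A n \<omega>)) / n) \<longlonglongrightarrow> 0"
    using a0 up low by (intro ln_sum_div_last_tendsto_0) auto
  show "(\<lambda>n. ln ((\<Sum>k\<le>n. cmod (A k \<omega>)) / cmod (A 0 \<omega>)) / n) \<longlonglongrightarrow> 0"
    using a0 up by (intro ln_sum_div_first_tendsto_0) auto
qed

section \<open>Almost sure size of the coefficients\<close>

lemma summable_le_nn_integral_intervals:
  fixes h :: "real \<Rightarrow> real" and c lo hi :: "nat \<Rightarrow> real" and J :: "real set"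
  assumes lohi: "\<And>n. lo n < hi n"
    and disj: "\<And>m n. m \<noteq> n \<Longrightarrow> {lo m..<hi m} \<inter> {lo n..<hi n} = {}"
    and sub: "\<And>n. {lo n..<hi n} \<subseteq> J"
    and hb: "\<And>n x. x \<in> {lo n..<hi n} \<Longrightarrow> c n \<le> h x * (hi n - lo n)"
    and c0: "\<And>n. c n \<ge> 0"
    and fin: "(\<integral>\<^sup>+ x\<in>J. ennreal (h x) \<partial>lborel) < \<infinity>"
  shows "summable c"
proof (rule summable_suminf_not_top[OF c0])
  define st where "st n x = ennreal (c n / (hi n - lo n)) * indicator {lo n..<hi n} x" for n x
  have int_st: "(\<integral>\<^sup>+ x. st n x \<partial>lborel) = ennreal (c n)" for n
  proof -
    have "(\<integral>\<^sup>+ x. st n x \<partial>lborel) = ennreal (c n / (hi n - lo n)) * ennreal (hi n - lo n)"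
      unfolding st_def using lohi[of n] by (subst nn_integral_cmult_indicator) auto
    also have "\<dots> = ennreal (c n)"
      using lohi[of n] c0[of n] by (simp add: ennreal_mult'[symmetric])
    finally show ?thesis .
  qed
  have pw: "(\<Sum>n. st n x) \<le> ennreal (h x) * indicator J x" for x
  proof (cases "\<exists>m. x \<in> {lo m..<hi m}")
    case True
    then obtain m where m: "x \<in> {lo m..<hi m}" by blast
    have "(\<Sum>n. st n x) = (\<Sum>n\<in>{m}. st n x)"
    proof (rule suminf_finite)
      fix n assume "n \<notin> {m}"
      then have "x \<notin> {lo n..<hi n}" using disj[of n m] m by auto
      then show "st n x = 0" by (simp add: st_def)
    qed simp
    also have "\<dots> = ennreal (c m / (hi m - lo m))" using m by (simp add: st_def)
    also have "\<dots> \<le> ennreal (h x)"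
      using hb[OF m] lohi[of m] by (intro ennreal_leI) (simp add: divide_le_eq)
    also have "\<dots> = ennreal (h x) * indicator J x" using sub[of m] m by auto
    finally show ?thesis .
  next
    case False
    then show ?thesis by (simp add: st_def)
  qed
  have "(\<Sum>n. ennreal (c n)) = (\<Sum>n. \<integral>\<^sup>+ x. st n x \<partial>lborel)" by (simp add: int_st)
  also have "\<dots> = (\<integral>\<^sup>+ x. (\<Sum>n. st n x) \<partial>lborel)"
    by (rule nn_integral_suminf[symmetric]) (simp add: st_def)
  also have "\<dots> \<le> (\<integral>\<^sup>+ x. ennreal (h x) * indicator J x \<partial>lborel)"
    by (intro nn_integral_mono pw)
  also have "\<dots> < \<infinity>" using fin by simp
  finally show "(\<Sum>n. ennreal (c n)) \<noteq> \<top>" by simp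
qed

text \<open>The intervals \<open>[e^(\<epsilon>(t-1)), e^(\<epsilon>t))\<close> have relative length \<open>1 - e^(-\<epsilon>)\<close>, so a sample
  below \<open>h\<close> on each of them is at most \<open>1 / (1 - e^(-\<epsilon>))\<close> times the integral of \<open>h x / x\<close> over it.\<close>
lemma summable_samples_log_scale:
  fixes h :: "real \<Rightarrow> real" and v :: "nat \<Rightarrow> real" and t :: "nat \<Rightarrow> int" and \<epsilon> :: real
  assumes e: "\<epsilon> > 0" and t: "inj t"
    and sub: "\<And>n. {exp (\<epsilon> * (t n - 1))..<exp (\<epsilon> * t n)} \<subseteq> J"
    and v: "\<And>n x. x \<in> {exp (\<epsilon> * (t n - 1))..<exp (\<epsilon> * t n)} \<Longrightarrow> v n \<le> h x"
    and v0: "\<And>n. 0 \<le> v n"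
    and fin: "(\<integral>\<^sup>+ x\<in>J. ennreal (h x / x) \<partial>lborel) < \<infinity>"
  shows "summable v"
proof -
  define lo where "lo n = exp (\<epsilon> * (t n - 1))" for n
  define hi where "hi n = exp (\<epsilon> * t n)" for n
  have lohi: "lo n < hi n" for n using e by (simp add: lo_def hi_def)
  have q: "hi n - lo n = hi n * (1 - exp (- \<epsilon>))" for n
    by (simp add: lo_def hi_def algebra_simps flip: exp_add)
  have "summable (\<lambda>n. v n * (1 - exp (- \<epsilon>)))"
  proof (rule summable_le_nn_integral_intervals[where lo = lo and hi = hi and J = J])
    show "{lo m..<hi m} \<inter> {lo n..<hi n} = {}" if "m \<noteq> n" for m n
    proof -
      have "hi m \<le> lo n" if "t m < t n" for m n
        using that e by (simp add: lo_def hi_def)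
      moreover have "t m \<noteq> t n" using t \<open>m \<noteq> n\<close> by (auto dest: injD)
      ultimately show ?thesis by (cases "t m < t n") (auto simp: not_less dest: order.not_eq_order_implies_strict)
    qed
    show "v n * (1 - exp (- \<epsilon>)) \<le> h x / x * (hi n - lo n)" if x: "x \<in> {lo n..<hi n}" for n x
    proof -
      have "0 < x" using x by (auto simp: lo_def intro: less_le_trans[OF exp_gt_zero])
      have vh: "v n \<le> h x" using v[of x n] x by (simp add: lo_def hi_def)
      have "v n * (1 - exp (- \<epsilon>)) \<le> h x * (1 - exp (- \<epsilon>))"
        using vh e by (intro mult_right_mono) auto
      also have "\<dots> \<le> h x * (1 - exp (- \<epsilon>)) * (hi n / x)"
      proof -
        have "1 \<le> hi n / x" using x \<open>0 < x\<close> by simp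
        moreover have "0 \<le> h x * (1 - exp (- \<epsilon>))" using vh v0[of n] e by simp
        ultimately show ?thesis using mult_left_mono by fastforce
      qed
      finally show ?thesis by (simp add: q mult_ac)
    qed
  qed (use lohi sub e v0 fin in \<open>auto simp: lo_def hi_def\<close>)
  then have "summable (\<lambda>n. v n * (1 - exp (- \<epsilon>)) * (1 / (1 - exp (- \<epsilon>))))"
    by (rule summable_mult2)
  then show ?thesis using e by simp
qed

lemma summable_decreasing_samples_exp:
  fixes f :: "real \<Rightarrow> real" and a \<epsilon> :: real
  assumes a: "a > 1"
    and mono: "\<forall>x\<in>{a..}. \<forall>y\<in>{a..}. x \<le> y \<longrightarrow> f y \<le> f x"
    and rng: "\<forall>x\<in>{a..}. 0 \<le> f x \<and> f x \<le> 1"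
    and fin: "(\<integral>\<^sup>+ x\<in>{a..}. ennreal (f x / x) \<partial>lborel) < \<infinity>"
    and e: "\<epsilon> > 0"
  shows "summable (\<lambda>n. f (exp (\<epsilon> * n)))"
proof -
  obtain N :: nat where N: "ln a / \<epsilon> + 1 \<le> N" using real_arch_simple by blast
  have lo: "a \<le> exp (\<epsilon> * (real (n + N) - 1))" for n
  proof -
    have "ln a \<le> \<epsilon> * (real N - 1)" using N e by (simp add: field_simps)
    also have "\<dots> \<le> \<epsilon> * (real (n + N) - 1)" using e by (intro mult_left_mono) auto
    finally show ?thesis using a by (metis exp_le_cancel_iff exp_ln less_trans zero_less_one)
  qed
  have "summable (\<lambda>n. f (exp (\<epsilon> * real (n + N))))"
  proof (rule summable_samples_log_scale[where t = "\<lambda>n. int (n + N)" and J = "{a..}" and h = f])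
    show "inj (\<lambda>n. int (n + N))" by (auto intro: injI)
    show "{exp (\<epsilon> * (int (n + N) - 1))..<exp (\<epsilon> * int (n + N))} \<subseteq> {a..}" for n
      using lo[of n] by auto
    show "f (exp (\<epsilon> * real (n + N))) \<le> f x"
      if "x \<in> {exp (\<epsilon> * (int (n + N) - 1))..<exp (\<epsilon> * int (n + N))}" for n x
      using that lo[of n] mono by auto
    show "0 \<le> f (exp (\<epsilon> * real (n + N)))" for n
    proof -
      have "exp (\<epsilon> * (real (n + N) - 1)) \<le> exp (\<epsilon> * real (n + N))" using e by simp
      from order_trans[OF lo[of n] this] show ?thesis using rng atLeast_iff by blast
    qed
  qed (use e fin in auto)
  then show ?thesis by (rule summable_iff_shift[THEN iffD1])
qed

lemma summable_increasing_samples_exp: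
  fixes g :: "real \<Rightarrow> real" and b \<epsilon> :: real
  assumes b: "0 < b" "b < 1"
    and mono: "\<forall>x\<in>{0..b}. \<forall>y\<in>{0..b}. x \<le> y \<longrightarrow> g x \<le> g y"
    and rng: "\<forall>x\<in>{0..b}. 0 \<le> g x \<and> g x \<le> 1"
    and fin: "(\<integral>\<^sup>+ x\<in>{0..b}. ennreal (g x / x) \<partial>lborel) < \<infinity>"
    and e: "\<epsilon> > 0"
  shows "summable (\<lambda>n. g (exp (- (\<epsilon> * n))))"
proof -
  obtain N :: nat where N: "- ln b / \<epsilon> + 1 \<le> N" using real_arch_simple by blast
  have hi: "exp (\<epsilon> * (1 - real (n + N))) \<le> b" for n
  proof -
    have "\<epsilon> * (1 - real (n + N)) \<le> \<epsilon> * (1 - real N)" using e by (intro mult_left_mono) auto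
    also have "\<dots> \<le> ln b" using N e by (simp add: field_simps)
    finally show ?thesis using b(1) ln_ge_iff by blast
  qed
  have "summable (\<lambda>n. g (exp (- (\<epsilon> * real (n + N)))))"
  proof (rule summable_samples_log_scale[where t = "\<lambda>n. 1 - int (n + N)" and J = "{0..b}" and h = g])
    show "inj (\<lambda>n. 1 - int (n + N))" by (auto intro: injI)
    show "{exp (\<epsilon> * (1 - int (n + N) - 1))..<exp (\<epsilon> * (1 - int (n + N)))} \<subseteq> {0..b}" for n
    proof
      fix x assume x: "x \<in> {exp (\<epsilon> * (1 - int (n + N) - 1))..<exp (\<epsilon> * (1 - int (n + N)))}"
      then have "0 < x" by (smt (verit) exp_gt_zero atLeastLessThan_iff)
      then show "x \<in> {0..b}" using x hi[of n] by auto
    qed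
    show "g (exp (- (\<epsilon> * real (n + N)))) \<le> g x"
      if x: "x \<in> {exp (\<epsilon> * (1 - int (n + N) - 1))..<exp (\<epsilon> * (1 - int (n + N)))}" for n x
    proof -
      have l: "exp (- (\<epsilon> * real (n + N))) \<le> x" using x by (simp add: algebra_simps)
      have u: "x \<le> b" using x hi[of n] by (simp add: algebra_simps)
      show ?thesis using mono l u by (metis atLeastAtMost_iff exp_ge_zero order_trans)
    qed
    show "0 \<le> g (exp (- (\<epsilon> * real (n + N))))" for n
    proof -
      have "exp (- (\<epsilon> * real (n + N))) \<le> exp (\<epsilon> * (1 - real (n + N)))" using e by (simp add: algebra_simps)
      from order_trans[OF this hi[of n]] show ?thesis using rng by (simp add: less_imp_le)
    qed
  qed (use e fin in auto)
  then show ?thesis by (rule summable_iff_shift[THEN iffD1])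
qed

lemma AE_eventually_norm_le_exp:
  fixes M :: "'a measure" and A :: "nat \<Rightarrow> 'a \<Rightarrow> complex" and f :: "real \<Rightarrow> real"
  assumes "prob_space M" and meas: "\<And>k. A k \<in> borel_measurable M"
    and a: "a > 1"
    and mono: "\<forall>x\<in>{a..}. \<forall>y\<in>{a..}. x \<le> y \<longrightarrow> f y \<le> f x"
    and rng: "\<forall>x\<in>{a..}. 0 \<le> f x \<and> f x \<le> 1"
    and fin: "(\<integral>\<^sup>+ x\<in>{a..}. ennreal (f x / x) \<partial>lborel) < \<infinity>"
    and tail: "\<forall>x\<in>{a..}. \<forall>k. 1 - dist_fun M A k x \<le> f x"
    and e: "\<epsilon> > 0"
  shows "AE \<omega> in M. eventually (\<lambda>n. cmod (A n \<omega>) \<le> exp (\<epsilon> * real n)) sequentially"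
proof -
  interpret prob_space M by fact
  have [measurable]: "A k \<in> borel_measurable M" for k by (rule meas)
  define E where "E n = {\<omega> \<in> space M. exp (\<epsilon> * real n) < cmod (A n \<omega>)}" for n
  have [measurable]: "E n \<in> sets M" for n unfolding E_def by measurable
  have PE: "prob (E n) = 1 - dist_fun M A n (exp (\<epsilon> * real n))" for n
  proof -
    have "space M - E n = {\<omega> \<in> space M. cmod (A n \<omega>) \<le> exp (\<epsilon> * real n)}"
      by (auto simp: E_def)
    then show ?thesis using prob_compl[of "E n"] by (simp add: dist_fun_def)
  qed
  have "filterlim (\<lambda>n. exp (\<epsilon> * real n)) at_top sequentially" using e by real_asymp
  then have "eventually (\<lambda>n. a \<le> exp (\<epsilon> * real n)) sequentially"
    unfolding filterlim_at_top by blast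
  then have "eventually (\<lambda>n. norm (prob (E n)) \<le> f (exp (\<epsilon> * real n))) sequentially"
  proof eventually_elim
    case (elim n)
    then show ?case using tail measure_nonneg[of M "E n"] by (simp add: PE)
  qed
  then have "summable (\<lambda>n. prob (E n))"
    by (rule summable_comparison_test_ev) (rule summable_decreasing_samples_exp[OF a mono rng fin e])
  then have "AE \<omega> in M. eventually (\<lambda>n. \<omega> \<in> space M - E n) sequentially"
    by (intro borel_cantelli_AE1) (auto simp: less_top[symmetric])
  then show ?thesis by (rule eventually_mono) (auto elim!: eventually_mono simp: E_def not_less)
qed

lemma AE_eventually_exp_le_norm:
  fixes M :: "'a measure" and A :: "nat \<Rightarrow> 'a \<Rightarrow> complex" and g :: "real \<Rightarrow> real"
  assumes "prob_space M" and meas: "\<And>k. A k \<in> borel_measurable M"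
    and b: "0 < b" "b < 1"
    and mono: "\<forall>x\<in>{0..b}. \<forall>y\<in>{0..b}. x \<le> y \<longrightarrow> g x \<le> g y"
    and rng: "\<forall>x\<in>{0..b}. 0 \<le> g x \<and> g x \<le> 1"
    and fin: "(\<integral>\<^sup>+ x\<in>{0..b}. ennreal (g x / x) \<partial>lborel) < \<infinity>"
    and head: "\<forall>x\<in>{0..b}. \<forall>k. dist_fun M A k x \<le> g x"
    and e: "\<epsilon> > 0"
  shows "AE \<omega> in M. eventually (\<lambda>n. exp (- (\<epsilon> * real n)) \<le> cmod (A n \<omega>)) sequentially"
proof -
  interpret prob_space M by fact
  have [measurable]: "A k \<in> borel_measurable M" for k by (rule meas)
  define E where "E n = {\<omega> \<in> space M. cmod (A n \<omega>) < exp (- (\<epsilon> * real n))}" for n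
  have [measurable]: "E n \<in> sets M" for n unfolding E_def by measurable
  have PE: "prob (E n) \<le> dist_fun M A n (exp (- (\<epsilon> * real n)))" for n
    unfolding dist_fun_def E_def by (rule finite_measure_mono) auto
  have "(\<lambda>n. exp (- (\<epsilon> * real n))) \<longlonglongrightarrow> 0" using e by real_asymp
  then have "eventually (\<lambda>n. exp (- (\<epsilon> * real n)) < b) sequentially"
    using b(1) by (rule order_tendstoD)
  then have "eventually (\<lambda>n. norm (prob (E n)) \<le> g (exp (- (\<epsilon> * real n)))) sequentially"
    by eventually_elim (use head PE in \<open>fastforce intro: order_trans\<close>)
  then have "summable (\<lambda>n. prob (E n))"
    by (rule summable_comparison_test_ev) (rule summable_increasing_samples_exp[OF b mono rng fin e])
  then have "AE \<omega> in M. eventually (\<lambda>n. \<omega> \<in> space M - E n) sequentially"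
    by (intro borel_cantelli_AE1) (auto simp: less_top[symmetric])
  then show ?thesis by (rule eventually_mono) (auto elim!: eventually_mono simp: E_def not_less)
qed

lemma AE_coeff_nonzero:
  fixes M :: "'a measure" and A :: "nat \<Rightarrow> 'a \<Rightarrow> complex" and g :: "real \<Rightarrow> real"
  assumes "prob_space M" and meas: "A k \<in> borel_measurable M"
    and b: "0 < b" "b < 1"
    and mono: "\<forall>x\<in>{0..b}. \<forall>y\<in>{0..b}. x \<le> y \<longrightarrow> g x \<le> g y"
    and rng: "\<forall>x\<in>{0..b}. 0 \<le> g x \<and> g x \<le> 1"
    and fin: "(\<integral>\<^sup>+ x\<in>{0..b}. ennreal (g x / x) \<partial>lborel) < \<infinity>"
    and head: "\<forall>x\<in>{0..b}. dist_fun M A k x \<le> g x"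
  shows "AE \<omega> in M. A k \<omega> \<noteq> 0"
proof -
  interpret prob_space M by fact
  note meas[measurable]
  define Z where "Z = {\<omega> \<in> space M. A k \<omega> = 0}"
  have Z[measurable]: "Z \<in> sets M" unfolding Z_def by measurable
  have "(\<lambda>n. exp (- (1 * real n))) \<longlonglongrightarrow> 0" by real_asymp
  then have "eventually (\<lambda>n. exp (- (1 * real n)) < b) sequentially"
    using b(1) by (rule order_tendstoD)
  then have ev: "eventually (\<lambda>n. prob Z \<le> g (exp (- (1 * real n)))) sequentially"
  proof eventually_elim
    case (elim n)
    have "prob Z \<le> dist_fun M A k (exp (- (1 * real n)))"
      unfolding dist_fun_def Z_def by (rule finite_measure_mono) auto
    also have "\<dots> \<le> g (exp (- (1 * real n)))" using head elim by auto
    finally show ?case .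
  qed
  have "(\<lambda>n. g (exp (- (1 * real n)))) \<longlonglongrightarrow> 0"
    by (intro summable_LIMSEQ_zero summable_increasing_samples_exp[OF b mono rng fin]) simp
  from tendsto_le[OF sequentially_bot this tendsto_const ev] have "prob Z \<le> 0" .
  then have "Z \<in> null_sets M" using Z measure_nonneg[of M Z] by (auto simp: emeasure_eq_measure)
  then show ?thesis by (rule AE_I') (auto simp: Z_def)
qed

lemma AE_eventually_all_pos:
  fixes P :: "real \<Rightarrow> nat \<Rightarrow> 'a \<Rightarrow> bool"
  assumes AE: "\<And>\<epsilon>. \<epsilon> > 0 \<Longrightarrow> AE \<omega> in M. eventually (\<lambda>n. P \<epsilon> n \<omega>) sequentially"
    and mono: "\<And>\<epsilon> \<epsilon>' n \<omega>. \<epsilon> \<le> \<epsilon>' \<Longrightarrow> P \<epsilon> n \<omega> \<Longrightarrow> P \<epsilon>' n \<omega>"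
  shows "AE \<omega> in M. \<forall>\<epsilon>>0. eventually (\<lambda>n. P \<epsilon> n \<omega>) sequentially"
proof -
  have "AE \<omega> in M. \<forall>j::nat. eventually (\<lambda>n. P (inverse (Suc j)) n \<omega>) sequentially"
    unfolding AE_all_countable by (intro allI AE) simp
  then show ?thesis
  proof (rule eventually_mono, intro allI impI)
    fix \<omega> and \<epsilon> :: real
    assume H: "\<forall>j::nat. eventually (\<lambda>n. P (inverse (Suc j)) n \<omega>) sequentially" and "\<epsilon> > 0"
    then obtain j where j: "inverse (real (Suc j)) < \<epsilon>" using reals_Archimedean by blast
    from H have "eventually (\<lambda>n. P (inverse (Suc j)) n \<omega>) sequentially" by blast
    then show "eventually (\<lambda>n. P \<epsilon> n \<omega>) sequentially"
      by (rule eventually_mono) (rule mono[OF less_imp_le[OF j]])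
  qed
qed

theorem theorem2p1:
  fixes M :: "'a measure" and A :: "nat \<Rightarrow> 'a \<Rightarrow> complex"
  assumes "prob_space M"
    and "\<And>k. A k \<in> borel_measurable M"
    and "\<exists>a::real. \<exists>f::real \<Rightarrow> real. a > 1 \<and>
           (\<forall>x\<in>{a..}. \<forall>y\<in>{a..}. x \<le> y \<longrightarrow> f y \<le> f x) \<and>
           (\<forall>x\<in>{a..}. 0 \<le> f x \<and> f x \<le> 1) \<and>
           (\<integral>\<^sup>+ x\<in>{a..}. ennreal (f x / x) \<partial>lborel) < \<infinity> \<and>
           (\<forall>x\<in>{a..}. \<forall>k. 1 - dist_fun M A k x \<le> f x)"
    and "\<exists>b::real. \<exists>g::real \<Rightarrow> real. 0 < b \<and> b < 1 \<and>
           (\<forall>x\<in>{0..b}. \<forall>y\<in>{0..b}. x \<le> y \<longrightarrow> g x \<le> g y) \<and>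
           (\<forall>x\<in>{0..b}. 0 \<le> g x \<and> g x \<le> 1) \<and>
           (\<integral>\<^sup>+ x\<in>{0..b}. ennreal (g x / x) \<partial>lborel) < \<infinity> \<and>
           (\<forall>x\<in>{0..b}. \<forall>k. dist_fun M A k x \<le> g x)"
  shows "AE \<omega> in M. weak_conv_c
           (\<lambda>n. zero_counting_measure n (rand_poly A n \<omega>)) unit_circle_measure"
proof -
  obtain a f where tail: "a > 1" "\<forall>x\<in>{a..}. \<forall>y\<in>{a..}. x \<le> y \<longrightarrow> f y \<le> f x"
    "\<forall>x\<in>{a..}. 0 \<le> f x \<and> f x \<le> 1" "(\<integral>\<^sup>+ x\<in>{a..}. ennreal (f x / x) \<partial>lborel) < \<infinity>"
    "\<forall>x\<in>{a..}. \<forall>k. 1 - dist_fun M A k x \<le> f x"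
    using assms(3) by blast
  obtain b g where head: "0 < b" "b < 1" "\<forall>x\<in>{0..b}. \<forall>y\<in>{0..b}. x \<le> y \<longrightarrow> g x \<le> g y"
    "\<forall>x\<in>{0..b}. 0 \<le> g x \<and> g x \<le> 1" "(\<integral>\<^sup>+ x\<in>{0..b}. ennreal (g x / x) \<partial>lborel) < \<infinity>"
    "\<forall>x\<in>{0..b}. \<forall>k. dist_fun M A k x \<le> g x"
    using assms(4) by blast
  have "AE \<omega> in M. \<forall>\<epsilon>>0. eventually (\<lambda>n. cmod (A n \<omega>) \<le> exp (\<epsilon> * real n)) sequentially"
    using AE_eventually_norm_le_exp[OF assms(1,2) tail]
    by (rule AE_eventually_all_pos) (auto elim!: order.trans simp: mult_right_mono)
  moreover have "AE \<omega> in M. \<forall>\<epsilon>>0.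
      eventually (\<lambda>n. exp (- (\<epsilon> * real n)) \<le> cmod (A n \<omega>)) sequentially"
    using AE_eventually_exp_le_norm[OF assms(1,2) head]
    by (rule AE_eventually_all_pos) (auto elim!: order.trans[rotated] simp: mult_right_mono)
  moreover have "AE \<omega> in M. A 0 \<omega> \<noteq> 0"
    using head by (intro AE_coeff_nonzero[OF assms(1,2)]) auto
  ultimately show ?thesis
    by eventually_elim (auto intro: weak_conv_zero_counting_rand_poly_subexponential)
qed
end
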